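(* Let $M\in\mathbb R^{\mathbb N\times\mathbb N}$ be bounded on $\ell_2$ and elliptic (there is $C_{\rm ell}>0$ with $Mx\cdot x\ge C_{\rm ell}\|x\|_{\ell_2}^2$ for all $x$). Let $n_1=1<n_2<\cdots$ be a block structure and let $M$ be block-banded: $M(i,j)=0$ for $|i-j|>b_0$, some $b_0\in\mathbb N$. Then the block-$LU$-factorization $M=LU$ with $L$ block-lower triangular, $U$ block-upper triangular and $L(i,i)=I$ for all $i$ exists, $L$ and $U$ are block-banded with bandwidth $b_0$, and \[\|L\|_2+\|U\|_2+\|L^{-1}\|_2+\|U^{-1}\|_2<\infty.\] Moreover, the block-diagonal matrix $D$ with $D(i,i):=U(i,i)$ is bounded and elliptic, with bounded and elliptic inverse.
   Context: $\|\cdot\|_2$ is the operator norm on $\ell_2$. Block notation: $M(i,j)=M|_{\{n_i,\dots,n_{i+1}-1\}\times\{n_j,\dots,n_{j+1}-1\}}$. Block-lower (upper) triangular means $M(i,j)=0$ for $i<j$ ($i>j$); block-banded with bandwidth $b$ means $M(i,j)=0$ for $|i-j|>b$. *)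

theory Defs
  imports Complex_Main
begin

text \<open>Infinite real matrices are functions nat => nat => real (0-based indices);
  vectors are functions nat => real.\<close>

type_synonym imat = "nat \<Rightarrow> nat \<Rightarrow> real"
type_synonym ivec = "nat \<Rightarrow> real"

definition in_l2 :: "ivec \<Rightarrow> bool" where
  "in_l2 x \<longleftrightarrow> summable (\<lambda>i. (x i)^2)"

definition l2norm :: "ivec \<Rightarrow> real" where
  "l2norm x = sqrt (\<Sum>i. (x i)^2)"

definition l2inner :: "ivec \<Rightarrow> ivec \<Rightarrow> real" where
  "l2inner x y = (\<Sum>i. x i * y i)"

definition mv :: "imat \<Rightarrow> ivec \<Rightarrow> ivec" where
  "mv M x = (\<lambda>i. \<Sum>j. M i j * x j)"

definition mmul :: "imat \<Rightarrow> imat \<Rightarrow> imat" where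
  "mmul A B = (\<lambda>i j. \<Sum>k. A i k * B k j)"

definition bounded_l2 :: "imat \<Rightarrow> bool" where
  "bounded_l2 M \<longleftrightarrow> (\<exists>C. \<forall>x. in_l2 x \<longrightarrow>
      (\<forall>i. summable (\<lambda>j. M i j * x j)) \<and> in_l2 (mv M x) \<and> l2norm (mv M x) \<le> C * l2norm x)"

definition elliptic_l2 :: "imat \<Rightarrow> bool" where
  "elliptic_l2 M \<longleftrightarrow> (\<exists>c>0. \<forall>x. in_l2 x \<longrightarrow> l2inner (mv M x) x \<ge> c * (l2norm x)^2)"

definition l2_inverse :: "imat \<Rightarrow> imat \<Rightarrow> bool" where
  "l2_inverse A B \<longleftrightarrow> (\<forall>x. in_l2 x \<longrightarrow> mv A (mv B x) = x \<and> mv B (mv A x) = x)"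

text \<open>Block structure: nb :: nat => nat strictly increasing, nb 0 = 0
  (0-based version of n_1 = 1 < n_2 < ...). Block i is {nb i ..< nb (Suc i)}.\<close>
definition block_structure :: "(nat \<Rightarrow> nat) \<Rightarrow> bool" where
  "block_structure nb \<longleftrightarrow> nb 0 = 0 \<and> strict_mono nb"

definition blk :: "(nat \<Rightarrow> nat) \<Rightarrow> nat \<Rightarrow> nat set" where
  "blk nb i = {nb i ..< nb (Suc i)}"

definition block_zero :: "(nat \<Rightarrow> nat) \<Rightarrow> imat \<Rightarrow> nat \<Rightarrow> nat \<Rightarrow> bool" where
  "block_zero nb M i j \<longleftrightarrow> (\<forall>r\<in>blk nb i. \<forall>c\<in>blk nb j. M r c = 0)"

definition block_lower :: "(nat \<Rightarrow> nat) \<Rightarrow> imat \<Rightarrow> bool" where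
  "block_lower nb M \<longleftrightarrow> (\<forall>i j. i < j \<longrightarrow> block_zero nb M i j)"

definition block_upper :: "(nat \<Rightarrow> nat) \<Rightarrow> imat \<Rightarrow> bool" where
  "block_upper nb M \<longleftrightarrow> (\<forall>i j. i > j \<longrightarrow> block_zero nb M i j)"

definition block_banded :: "(nat \<Rightarrow> nat) \<Rightarrow> nat \<Rightarrow> imat \<Rightarrow> bool" where
  "block_banded nb b M \<longleftrightarrow> (\<forall>i j. (i > j + b \<or> j > i + b) \<longrightarrow> block_zero nb M i j)"

definition unit_block_diag :: "(nat \<Rightarrow> nat) \<Rightarrow> imat \<Rightarrow> bool" where
  "unit_block_diag nb M \<longleftrightarrow>
     (\<forall>i. \<forall>r\<in>blk nb i. \<forall>c\<in>blk nb i. M r c = (if r = c then 1 else 0))"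

definition block_diag_part :: "(nat \<Rightarrow> nat) \<Rightarrow> imat \<Rightarrow> imat" where
  "block_diag_part nb U = (\<lambda>r c. if (\<exists>i. r \<in> blk nb i \<and> c \<in> blk nb i) then U r c else 0)"

end

theory Submission
  imports Defs "Jordan_Normal_Form.Determinant" "HOL-Analysis.Convex"
begin

text \<open>
  Let \<open>S\<^sub>k\<close> be the leading section of \<open>M\<close> on the first \<open>k\<close> blocks. It inherits the
  ellipticity constant \<open>c\<close> of \<open>M\<close>, so it is invertible with \<open>\<parallel>S\<^sub>k\<^sup>-\<^sup>1\<parallel> \<le> 1/c\<close>. The
  factors are written down from these inverses: block column \<open>j\<close> of \<open>U\<^sup>-\<^sup>1\<close> is the
  corresponding column block of \<open>S\<^sub>j\<^sub>+\<^sub>1\<^sup>-\<^sup>1\<close>, \<open>L = M U\<^sup>-\<^sup>1\<close>, block row \<open>i\<close> of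
  \<open>L\<^sup>-\<^sup>1\<close> is \<open>[-M(i,<i) S\<^sub>i\<^sup>-\<^sup>1 | I | 0]\<close>, and \<open>U = L\<^sup>-\<^sup>1 M\<close> is a Schur complement.
  All algebraic identities are verified on finite sections.

  Every block of \<open>L\<close> and \<open>U\<close> is a product of blocks of \<open>M\<close> and of some \<open>S\<^sub>k\<^sup>-\<^sup>1\<close>,
  hence uniformly bounded, and a block-banded matrix with uniformly bounded blocks is bounded.
  \<open>U\<^sup>-\<^sup>1 x\<close> and \<open>L\<^sup>-\<^sup>1 x\<close> solve section systems \<open>S\<^sub>n v = w\<close> with \<open>w\<close> controlled by \<open>L\<close>
  resp. \<open>U\<close>, which bounds the inverses. Finally \<open>U(k,k)\<^sup>-\<^sup>1\<close> is a diagonal block of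
  \<open>S\<^sub>k\<^sub>+\<^sub>1\<^sup>-\<^sup>1\<close>; testing the ellipticity of \<open>M\<close> on \<open>S\<^sub>k\<^sub>+\<^sub>1\<^sup>-\<^sup>1 y\<close> with \<open>y\<close>
  supported in block \<open>k\<close> shows that the diagonal blocks of \<open>U\<close> and \<open>U\<^sup>-\<^sup>1\<close> are uniformly
  elliptic.
\<close>

section \<open>Square-summable sequences and finite sections\<close>

lemma summable_mult_if_square_summable:
  assumes "summable (\<lambda>j. (a j)^2)" "summable (\<lambda>j. (x j)^2)"
  shows "summable (\<lambda>j. (a j::real) * x j)"
proof (rule summable_comparison_test')
  show "summable (\<lambda>j. ((a j)^2 + (x j)^2) / 2)"
    using assms by (intro summable_divide summable_add)
  show "norm (a j * x j) \<le> ((a j)^2 + (x j)^2) / 2" for j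
  proof -
    have "0 \<le> (\<bar>a j\<bar> - \<bar>x j\<bar>)^2" by simp
    thus ?thesis by (simp add: power2_diff abs_mult power2_abs)
  qed
qed

lemma power2_diff_le: "((a::real) - b)^2 \<le> 2 * a^2 + 2 * b^2"
proof -
  have "0 \<le> (a + b)^2" by simp
  thus ?thesis by (simp add: power2_diff power2_sum)
qed

lemma in_l2_diff: "in_l2 x \<Longrightarrow> in_l2 y \<Longrightarrow> in_l2 (\<lambda>i. x i - y i)"
  unfolding in_l2_def
proof (rule summable_comparison_test')
  assume "summable (\<lambda>i. (x i)^2)" "summable (\<lambda>i. (y i)^2)"
  thus "summable (\<lambda>i. 2 * (x i)^2 + 2 * (y i)^2)" by (intro summable_add summable_mult)
  show "norm ((x i - y i)^2) \<le> 2 * (x i)^2 + 2 * (y i)^2" for i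
    using power2_diff_le[of "x i" "y i"] by simp
qed

lemma l2norm_sq: "in_l2 x \<Longrightarrow> (l2norm x)^2 = (\<Sum>i. (x i)^2)"
  unfolding l2norm_def in_l2_def by (simp add: suminf_nonneg)

lemma mv_eq_sum_if_support:
  assumes "finite T" "\<And>j. j \<notin> T \<Longrightarrow> x j = 0"
  shows "mv A x i = (\<Sum>j\<in>T. A i j * x j)"
  unfolding mv_def by (rule suminf_finite) (use assms in auto)

lemma mv_eq_sum_lessThan: "(\<And>j. m \<le> j \<Longrightarrow> A i j = 0) \<Longrightarrow> mv A x i = (\<Sum>j<m. A i j * x j)"
  unfolding mv_def by (rule suminf_finite) auto

definition finite_sections_bounded :: "imat \<Rightarrow> real \<Rightarrow> bool" where
  "finite_sections_bounded A K \<longleftrightarrow> (\<forall>R T x. finite R \<longrightarrow> finite T \<longrightarrow>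
      (\<Sum>i\<in>R. (\<Sum>j\<in>T. A i j * x j)^2) \<le> K^2 * (\<Sum>j\<in>T. (x j)^2))"

lemma finite_sections_boundedD:
  "finite_sections_bounded A K \<Longrightarrow> finite R \<Longrightarrow> finite T \<Longrightarrow>
      (\<Sum>i\<in>R. (\<Sum>j\<in>T. A i j * x j)^2) \<le> K^2 * (\<Sum>j\<in>T. (x j)^2)"
  unfolding finite_sections_bounded_def by blast

lemma finite_sections_bounded_mono:
  "finite_sections_bounded A K \<Longrightarrow> K^2 \<le> K'^2 \<Longrightarrow> finite_sections_bounded A K'"
  unfolding finite_sections_bounded_def
  by (meson mult_right_mono order_trans sum_nonneg zero_le_power2)

lemma finite_sections_bounded_row:
  assumes "finite_sections_bounded A K"
  shows "(\<Sum>j<n. (A i j)^2) \<le> K^2"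
proof -
  define s where "s = (\<Sum>j<n. (A i j)^2)"
  have "(\<Sum>i'\<in>{i}. (\<Sum>j\<in>{..<n}. A i' j * A i j)^2) \<le> K^2 * (\<Sum>j\<in>{..<n}. (A i j)^2)"
    by (rule finite_sections_boundedD[OF assms]) auto
  hence "s^2 \<le> K^2 * s" unfolding s_def by (simp add: power2_eq_square)
  moreover have "0 \<le> s" unfolding s_def by (intro sum_nonneg) auto
  ultimately show ?thesis unfolding s_def[symmetric]
    by (cases "s = 0") (auto simp: power2_eq_square)
qed

lemma bounded_l2_if_finite_sections_bounded:
  assumes fb: "finite_sections_bounded A K"
  shows "bounded_l2 A"
  unfolding bounded_l2_def
proof (intro exI[of _ "\<bar>K\<bar>"] allI impI conjI)
  fix x assume xl: "in_l2 x"
  hence xs: "summable (\<lambda>j. (x j)^2)" unfolding in_l2_def .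
  define S where "S = (\<Sum>j. (x j)^2)"
  have rows: "summable (\<lambda>j. (A i j)^2)" for i
    by (rule summableI_nonneg_bounded[where x="K^2"]) (use finite_sections_bounded_row[OF fb] in auto)
  show sm: "summable (\<lambda>j. A i j * x j)" for i
    by (rule summable_mult_if_square_summable[OF rows xs])
  define y where "y = mv A x"
  have lim: "(\<lambda>n. \<Sum>j<n. A i j * x j) \<longlonglongrightarrow> y i" for i
    unfolding y_def mv_def using summable_LIMSEQ[OF sm[of i]] by simp
  have partial: "(\<Sum>i\<in>R. (y i)^2) \<le> K^2 * S" if "finite R" for R
  proof (rule LIMSEQ_le_const2)
    show "(\<lambda>n. \<Sum>i\<in>R. (\<Sum>j<n. A i j * x j)^2) \<longlonglongrightarrow> (\<Sum>i\<in>R. (y i)^2)"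
      by (intro tendsto_sum tendsto_power lim)
    show "\<exists>N. \<forall>n\<ge>N. (\<Sum>i\<in>R. (\<Sum>j<n. A i j * x j)^2) \<le> K^2 * S"
    proof (intro exI allI impI)
      fix n
      have "(\<Sum>i\<in>R. (\<Sum>j<n. A i j * x j)^2) \<le> K^2 * (\<Sum>j<n. (x j)^2)"
        using finite_sections_boundedD[OF fb that, of "{..<n}" x] by simp
      also have "\<dots> \<le> K^2 * S" unfolding S_def
        by (intro mult_left_mono sum_le_suminf xs) auto
      finally show "(\<Sum>i\<in>R. (\<Sum>j<n. A i j * x j)^2) \<le> K^2 * S" .
    qed
  qed
  have ys: "summable (\<lambda>i. (y i)^2)"
    by (rule summableI_nonneg_bounded[where x="K^2 * S"]) (use partial in auto)
  thus "in_l2 (mv A x)" unfolding in_l2_def y_def .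
  have "(\<Sum>i. (y i)^2) \<le> K^2 * S"
    by (rule suminf_le_const[OF ys]) (use partial in auto)
  hence "sqrt (\<Sum>i. (y i)^2) \<le> sqrt (K^2 * S)" by simp
  also have "\<dots> = \<bar>K\<bar> * sqrt S" by (simp add: real_sqrt_mult)
  finally show "l2norm (mv A x) \<le> \<bar>K\<bar> * l2norm x"
    unfolding l2norm_def y_def S_def .
qed

lemma finite_sections_bounded_if_bounded_l2:
  assumes "bounded_l2 A"
  shows "\<exists>K. finite_sections_bounded A K"
proof -
  from assms obtain C where C: "\<And>x. in_l2 x \<Longrightarrow> in_l2 (mv A x) \<and> l2norm (mv A x) \<le> C * l2norm x"
    unfolding bounded_l2_def by blast
  have "finite_sections_bounded A C" unfolding finite_sections_bounded_def
  proof (intro allI impI)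
    fix R T and x :: ivec assume R: "finite (R::nat set)" and T: "finite (T::nat set)"
    define x' where "x' j = (if j \<in> T then x j else 0)" for j
    have x'l: "in_l2 x'" unfolding in_l2_def
      by (rule summable_finite[OF T]) (auto simp: x'_def)
    have mvx: "mv A x' i = (\<Sum>j\<in>T. A i j * x j)" for i
      by (subst mv_eq_sum_if_support[OF T]) (auto simp: x'_def)
    have nx: "(l2norm x')^2 = (\<Sum>j\<in>T. (x j)^2)"
      by (subst l2norm_sq[OF x'l], subst suminf_finite[OF T]) (auto simp: x'_def)
    from C[OF x'l] have yl: "in_l2 (mv A x')" and yb: "l2norm (mv A x') \<le> C * l2norm x'" by auto
    have "(\<Sum>i\<in>R. (\<Sum>j\<in>T. A i j * x j)^2) = (\<Sum>i\<in>R. (mv A x' i)^2)" by (simp add: mvx)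
    also have "\<dots> \<le> (\<Sum>i. (mv A x' i)^2)"
      using yl unfolding in_l2_def by (intro sum_le_suminf R) auto
    also have "\<dots> = (l2norm (mv A x'))^2" using l2norm_sq[OF yl] by simp
    also have "\<dots> \<le> (C * l2norm x')^2"
      using yb yl by (intro power_mono) (auto simp: l2norm_def in_l2_def intro!: suminf_nonneg)
    also have "\<dots> = C^2 * (\<Sum>j\<in>T. (x j)^2)" by (simp add: power_mult_distrib nx)
    finally show "(\<Sum>i\<in>R. (\<Sum>j\<in>T. A i j * x j)^2) \<le> C^2 * (\<Sum>j\<in>T. (x j)^2)" .
  qed
  thus ?thesis by blast
qed

lemma elliptic_sections_if_elliptic_l2:
  assumes "elliptic_l2 M"
  shows "\<exists>c>0. \<forall>N x. c * (\<Sum>j<N. (x j)^2) \<le> (\<Sum>i<N. x i * (\<Sum>j<N. M i j * x j))"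
proof -
  obtain c where c: "c > 0" "\<And>x. in_l2 x \<Longrightarrow> l2inner (mv M x) x \<ge> c * (l2norm x)^2"
    using assms unfolding elliptic_l2_def by blast
  have "c * (\<Sum>j<N. (x j)^2) \<le> (\<Sum>i<N. x i * (\<Sum>j<N. M i j * x j))" for N x
  proof -
    define x' where "x' j = (if j < N then x j else 0)" for j
    have x'l: "in_l2 x'" unfolding in_l2_def
      by (rule summable_finite[of "{..<N}"]) (auto simp: x'_def)
    have mvx: "mv M x' i = (\<Sum>j<N. M i j * x j)" for i
      by (subst mv_eq_sum_if_support[of "{..<N}"]) (auto simp: x'_def)
    have "l2inner (mv M x') x' = (\<Sum>i<N. x i * (\<Sum>j<N. M i j * x j))"
      unfolding l2inner_def mvx by (subst suminf_finite[of "{..<N}"]) (auto simp: x'_def mult.commute)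
    moreover have "(l2norm x')^2 = (\<Sum>j<N. (x j)^2)"
      by (subst l2norm_sq[OF x'l], subst suminf_finite[of "{..<N}"]) (auto simp: x'_def)
    ultimately show ?thesis using c(2)[OF x'l] by simp
  qed
  thus ?thesis using c(1) by blast
qed

lemma elliptic_l2_injective:
  assumes "elliptic_l2 M" "in_l2 d" "mv M d = (\<lambda>_. 0)"
  shows "d = (\<lambda>_. 0)"
proof -
  obtain c where c: "c > 0" "\<And>x. in_l2 x \<Longrightarrow> l2inner (mv M x) x \<ge> c * (l2norm x)^2"
    using assms(1) unfolding elliptic_l2_def by blast
  have "c * (l2norm d)^2 \<le> 0" using c(2)[OF assms(2)] unfolding assms(3) l2inner_def by simp
  hence "(l2norm d)^2 \<le> 0" using c(1) by (simp add: mult_le_0_iff)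
  moreover have "0 \<le> (\<Sum>i. (d i)^2)" using assms(2) unfolding in_l2_def by (intro suminf_nonneg) auto
  ultimately have "(\<Sum>i. (d i)^2) = 0" using l2norm_sq[OF assms(2)] by simp
  hence "\<forall>i. (d i)^2 = 0" using assms(2) unfolding in_l2_def by (subst (asm) suminf_eq_zero_iff) auto
  thus ?thesis by auto
qed

section \<open>Inverses of finite sections\<close>

lemma sum_lessThan_eq_if_vanishing:
  fixes m n :: nat
  assumes "m \<le> n" "\<And>s. m \<le> s \<Longrightarrow> s < n \<Longrightarrow> f s = 0"
  shows "(\<Sum>s<n. f s) = (\<Sum>s<m. f s)"
  by (rule sum.mono_neutral_right) (use assms in auto)

lemma sum_lessThan_if_less:
  fixes m n :: nat
  assumes "m \<le> n"
  shows "(\<Sum>s<n. if s < m then f s else 0) = (\<Sum>s<m. f s)"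
  using sum_lessThan_eq_if_vanishing[OF assms, of "\<lambda>s. if s < m then f s else 0"] by simp

lemma sum_lessThan_if_mem:
  fixes N :: nat
  assumes "S \<subseteq> {..<N}"
  shows "(\<Sum>r<N. if r \<in> S then f r else 0) = (\<Sum>r\<in>S. f r)"
proof -
  have "(\<Sum>r<N. if r \<in> S then f r else 0) = sum f ({..<N} \<inter> S)"
    by (rule sum.inter_restrict[symmetric]) simp
  also have "{..<N} \<inter> S = S" using assms by auto
  finally show ?thesis .
qed

lemma sum_mult_sum_swap:
  fixes f h :: "'a \<Rightarrow> real"
  shows "(\<Sum>s\<in>A. f s * (\<Sum>t\<in>B. g s t)) = (\<Sum>t\<in>B. \<Sum>s\<in>A. f s * g s t)"
    and "(\<Sum>s\<in>A. (\<Sum>t\<in>B. g s t) * h s) = (\<Sum>t\<in>B. \<Sum>s\<in>A. g s t * h s)"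
  unfolding sum_distrib_left sum_distrib_right by (rule sum.swap)+

lemma sum_triple_product_swap:
  fixes a u :: "nat \<Rightarrow> real"
  shows "(\<Sum>t\<in>B. (\<Sum>r\<in>K. a r * (\<Sum>s\<in>K'. b r s * m s t)) * u t)
    = (\<Sum>r\<in>K. a r * (\<Sum>s\<in>K'. b r s * (\<Sum>t\<in>B. m s t * u t)))"
proof -
  have "(\<Sum>t\<in>B. (\<Sum>r\<in>K. a r * (\<Sum>s\<in>K'. b r s * m s t)) * u t)
      = (\<Sum>t\<in>B. \<Sum>r\<in>K. \<Sum>s\<in>K'. a r * (b r s * (m s t * u t)))"
    by (simp add: sum_distrib_left sum_distrib_right mult.assoc)
  also have "\<dots> = (\<Sum>r\<in>K. \<Sum>s\<in>K'. \<Sum>t\<in>B. a r * (b r s * (m s t * u t)))"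
    by (subst sum.swap) (rule sum.cong[OF refl], rule sum.swap)
  also have "\<dots> = (\<Sum>r\<in>K. a r * (\<Sum>s\<in>K'. b r s * (\<Sum>t\<in>B. m s t * u t)))"
    by (simp add: sum_distrib_left)
  finally show ?thesis .
qed

definition section_inverse :: "nat \<Rightarrow> imat \<Rightarrow> imat \<Rightarrow> bool" where
  "section_inverse N A B \<longleftrightarrow> (\<forall>i<N. \<forall>k<N. (\<Sum>j<N. A i j * B j k) = (if i = k then 1 else 0))"

lemma section_inverseD:
  "section_inverse N A B \<Longrightarrow> i < N \<Longrightarrow> k < N \<Longrightarrow> (\<Sum>j<N. A i j * B j k) = (if i = k then 1 else 0)"
  unfolding section_inverse_def by blast

lemma section_inverse_iff_mat:
  "section_inverse N A B \<longleftrightarrow> mat N N (\<lambda>(i,j). A i j) * mat N N (\<lambda>(i,j). B i j) = 1\<^sub>m N"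
proof -
  have entry: "(mat N N (\<lambda>(i,j). A i j) * mat N N (\<lambda>(i,j). B i j)) $$ (i,k) = (\<Sum>j<N. A i j * B j k)"
    if "i < N" "k < N" for i k
    using that by (simp add: scalar_prod_def atLeast0LessThan)
  show ?thesis
  proof
    assume inv: "section_inverse N A B"
    show "mat N N (\<lambda>(i,j). A i j) * mat N N (\<lambda>(i,j). B i j) = 1\<^sub>m N"
    proof (rule eq_matI)
      fix i k assume "i < dim_row (1\<^sub>m N)" "k < dim_col (1\<^sub>m N)"
      hence "i < N" "k < N" by simp_all
      thus "(mat N N (\<lambda>(i,j). A i j) * mat N N (\<lambda>(i,j). B i j)) $$ (i,k) = 1\<^sub>m N $$ (i,k)"
        by (subst entry) (use inv in \<open>auto simp: section_inverse_def\<close>)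
    qed auto
  next
    assume h: "mat N N (\<lambda>(i,j). A i j) * mat N N (\<lambda>(i,j). B i j) = 1\<^sub>m N"
    show "section_inverse N A B" unfolding section_inverse_def
    proof (intro allI impI)
      fix i k assume "i < N" "k < N"
      thus "(\<Sum>j<N. A i j * B j k) = (if i = k then 1 else 0)"
        using arg_cong[OF h, of "\<lambda>m. m $$ (i,k)"] entry by simp
    qed
  qed
qed

lemma section_inverse_apply:
  assumes "section_inverse N A B" "i < N" "S \<subseteq> {..<N}"
  shows "(\<Sum>t<N. A i t * (\<Sum>s\<in>S. B t s * y s)) = (if i \<in> S then y i else 0)"
proof -
  have "(\<Sum>t<N. A i t * (\<Sum>s\<in>S. B t s * y s)) = (\<Sum>s\<in>S. (\<Sum>t<N. A i t * B t s) * y s)"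
    by (simp add: sum_mult_sum_swap(1) sum_distrib_right mult.assoc)
  also have "\<dots> = (\<Sum>s\<in>S. if i = s then y s else 0)"
    using assms by (intro sum.cong refl) (auto simp: section_inverse_def)
  also have "\<dots> = (if i \<in> S then y i else 0)"
    using finite_subset[OF assms(3)] by simp
  finally show ?thesis .
qed

lemma section_inverse_sym: "section_inverse N A B \<Longrightarrow> section_inverse N B A"
  unfolding section_inverse_iff_mat by (rule mat_mult_left_right_inverse) auto

lemma section_inverse_exists:
  fixes A :: imat
  assumes inj: "\<And>x. \<forall>i<N. (\<Sum>j<N. A i j * x j) = 0 \<Longrightarrow> \<forall>j<N. x j = 0"
  shows "\<exists>B. section_inverse N A B \<and> section_inverse N B A"
proof -
  define Am where "Am = mat N N (\<lambda>(i,j). A i j)"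
  have Ac: "Am \<in> carrier_mat N N" unfolding Am_def by simp
  have "det Am \<noteq> 0"
  proof
    assume "det Am = 0"
    then obtain v where v: "v \<in> carrier_vec N" "v \<noteq> 0\<^sub>v N" "Am *\<^sub>v v = 0\<^sub>v N"
      using det_0_iff_vec_prod_zero[OF Ac] by blast
    have "\<forall>i<N. (\<Sum>j<N. A i j * v $ j) = 0"
    proof (intro allI impI)
      fix i assume "i < N"
      from arg_cong[OF v(3), of "\<lambda>w. w $ i"] \<open>i<N\<close> v(1)
      show "(\<Sum>j<N. A i j * v $ j) = 0"
        by (simp add: Am_def scalar_prod_def atLeast0LessThan)
    qed
    from inj[OF this] have "v = 0\<^sub>v N" using v(1) by (intro eq_vecI) auto
    with v(2) show False by simp
  qed
  from det_non_zero_imp_unit[OF Ac this, of undefined]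
  obtain Bm where B: "Bm \<in> carrier_mat N N" "Am * Bm = 1\<^sub>m N"
    unfolding Units_def ring_mat_def by auto
  define B where "B i j = Bm $$ (i,j)" for i j
  have "Bm = mat N N (\<lambda>(i,j). B i j)" using B(1) unfolding B_def by (intro eq_matI) auto
  with B(2) have "section_inverse N A B" unfolding section_inverse_iff_mat Am_def by simp
  thus ?thesis using section_inverse_sym by blast
qed

context
  fixes M :: imat and c :: real
  assumes c_pos: "c > 0"
    and elliptic: "\<And>N x. c * (\<Sum>j<N. (x j)^2) \<le> (\<Sum>i<N. x i * (\<Sum>j<N. M i j * x j))"
begin

lemma elliptic_section_injective: "\<forall>i<N. (\<Sum>j<N. M i j * x j) = 0 \<Longrightarrow> \<forall>j<N. x j = 0"
proof -
  assume "\<forall>i<N. (\<Sum>j<N. M i j * x j) = 0"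
  hence "c * (\<Sum>j<N. (x j)^2) \<le> 0" using elliptic[where N=N and x=x] by simp
  hence "(\<Sum>j<N. (x j)^2) = 0" using c_pos by (simp add: mult_le_0_iff antisym sum_nonneg)
  thus ?thesis by (simp add: sum_nonneg_eq_0_iff)
qed

text \<open>\<open>c\<parallel>z\<parallel>\<^sup>2 \<le> \<langle>z, M z\<rangle> \<le> \<parallel>z\<parallel> \<parallel>M z\<parallel>\<close> by ellipticity and Cauchy-Schwarz.\<close>

lemma elliptic_section_solution_bound:
  assumes solves: "\<And>s. s < N \<Longrightarrow> (\<Sum>t<N. M s t * z t) = v s"
  shows "c^2 * (\<Sum>t<N. (z t)^2) \<le> (\<Sum>s<N. (v s)^2)"
proof -
  define Z where "Z = (\<Sum>t<N. (z t)^2)"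
  define V where "V = (\<Sum>s<N. (v s)^2)"
  define P where "P = (\<Sum>s<N. z s * v s)"
  have Z0: "0 \<le> Z" unfolding Z_def by (intro sum_nonneg) auto
  have cZ: "c * Z \<le> P" using elliptic[where N=N and x=z] solves unfolding Z_def P_def by simp
  have PP: "P^2 \<le> Z * V" unfolding P_def Z_def V_def by (rule Cauchy_Schwarz_ineq_sum)
  show ?thesis
  proof (cases "Z = 0")
    case True thus ?thesis unfolding Z_def V_def by (simp add: sum_nonneg)
  next
    case False
    with Z0 have Zp: "Z > 0" by simp
    have "(c * Z)^2 \<le> P^2" using cZ c_pos Z0 by (intro power_mono) auto
    with PP have "c^2 * Z * Z \<le> V * Z" by (simp add: power2_eq_square algebra_simps)
    hence "c^2 * Z \<le> V" using Zp by simp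
    thus ?thesis unfolding Z_def V_def .
  qed
qed

lemma elliptic_section_inverse_bound:
  assumes "section_inverse N M B" "S \<subseteq> {..<N}"
  shows "c^2 * (\<Sum>t<N. (\<Sum>s\<in>S. B t s * y s)^2) \<le> (\<Sum>s\<in>S. (y s)^2)"
proof -
  have "c^2 * (\<Sum>t<N. (\<Sum>s\<in>S. B t s * y s)^2) \<le> (\<Sum>r<N. (if r \<in> S then y r else 0)^2)"
    by (rule elliptic_section_solution_bound) (use section_inverse_apply[OF assms(1) _ assms(2)] in simp)
  also have "\<dots> = (\<Sum>r<N. if r \<in> S then (y r)^2 else 0)"
    by (intro sum.cong) auto
  also have "\<dots> = (\<Sum>s\<in>S. (y s)^2)" by (rule sum_lessThan_if_mem[OF assms(2)])
  finally show ?thesis .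
qed

end

section \<open>Block partitions\<close>

definition block_index :: "(nat \<Rightarrow> nat) \<Rightarrow> nat \<Rightarrow> nat" where
  "block_index nb r = (LEAST i. r < nb (Suc i))"

lemma sum_band_indicator_le:
  fixes m b q :: nat
  shows "(\<Sum>l<q. (if l \<le> m + b \<and> m \<le> l + b then 1 else 0)::real) \<le> 2 * real b + 1"
proof -
  let ?B = "{l. l \<le> m + b \<and> m \<le> l + b}"
  have "(\<Sum>l<q. (if l \<le> m + b \<and> m \<le> l + b then 1 else 0)::real) = (\<Sum>l\<in>{..<q} \<inter> ?B. 1)"
    by (subst sum.inter_restrict) auto
  also have "\<dots> = real (card ({..<q} \<inter> ?B))" by simp
  also have "card ({..<q} \<inter> ?B) \<le> card {m - b .. m + b}"
    by (rule card_mono) auto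
  also have "card {m - b .. m + b} \<le> 2 * b + 1" by simp
  finally show ?thesis by simp
qed

lemma square_sum_le_band:
  fixes a :: "nat \<Rightarrow> real" and m b q :: nat
  assumes "\<And>l. \<not> (l \<le> m + b \<and> m \<le> l + b) \<Longrightarrow> a l = 0"
  shows "(\<Sum>l<q. a l)^2 \<le> (2 * real b + 1) * (\<Sum>l<q. (a l)^2)"
proof -
  define g where "g l = (if l \<le> m + b \<and> m \<le> l + b then 1 else 0 :: real)" for l
  have "(\<Sum>l<q. a l)^2 = (\<Sum>l<q. g l * a l)^2"
    using assms unfolding g_def by (intro arg_cong[where f="\<lambda>x. x^2"] sum.cong) auto
  also have "\<dots> \<le> (\<Sum>l<q. (g l)^2) * (\<Sum>l<q. (a l)^2)" by (rule Cauchy_Schwarz_ineq_sum)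
  also have "\<dots> \<le> (2 * real b + 1) * (\<Sum>l<q. (a l)^2)"
  proof (rule mult_right_mono)
    have "(g l)^2 = g l" for l unfolding g_def by simp
    thus "(\<Sum>l<q. (g l)^2) \<le> 2 * real b + 1" unfolding g_def by (simp add: sum_band_indicator_le)
  qed (simp add: sum_nonneg)
  finally show ?thesis .
qed

lemma sum_le_band:
  fixes f :: "nat \<Rightarrow> real"
  assumes "\<And>k. \<not> (k \<le> l + b \<and> l \<le> k + b) \<Longrightarrow> f k = 0" "\<And>k. f k \<le> C" "0 \<le> C"
  shows "(\<Sum>k<p. f k) \<le> (2 * real b + 1) * C"
proof -
  have "(\<Sum>k<p. f k) \<le> (\<Sum>k<p. (if k \<le> l + b \<and> l \<le> k + b then 1 else 0) * C)"
    using assms by (intro sum_mono) auto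
  also have "\<dots> = (\<Sum>k<p. if k \<le> l + b \<and> l \<le> k + b then 1 else 0 :: real) * C"
    by (simp add: sum_distrib_right)
  also have "\<dots> \<le> (2 * real b + 1) * C" using assms(3) by (intro mult_right_mono sum_band_indicator_le)
  finally show ?thesis .
qed

locale block_partition =
  fixes nb :: "nat \<Rightarrow> nat"
  assumes block_structure: "block_structure nb"
begin

abbreviation "bi \<equiv> block_index nb"

lemma nb_0: "nb 0 = 0" and strict_mono_nb: "strict_mono nb"
  using block_structure unfolding block_structure_def by auto

lemma less_nb_Suc_block_index: "r < nb (Suc (bi r))"
proof -
  have "r < nb (Suc r)" using strict_mono_imp_increasing[OF strict_mono_nb, of "Suc r"] by simp
  thus ?thesis unfolding block_index_def by (rule LeastI)
qed

lemma nb_block_index_le: "nb (bi r) \<le> r"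
proof (cases "bi r")
  case 0 thus ?thesis using nb_0 by simp
next
  case (Suc k)
  have "k < bi r" using Suc by simp
  hence "\<not> r < nb (Suc k)" unfolding block_index_def by (rule not_less_Least)
  thus ?thesis using Suc by simp
qed

lemma nb_le_nb_iff: "nb a \<le> nb b \<longleftrightarrow> a \<le> b"
  using strict_mono_nb by (simp add: strict_mono_less_eq)

lemma less_nb_iff: "r < nb k \<longleftrightarrow> bi r < k"
proof
  assume "r < nb k"
  thus "bi r < k" using nb_block_index_le[of r] nb_le_nb_iff[of k "bi r"] by linarith
next
  assume "bi r < k"
  hence "nb (Suc (bi r)) \<le> nb k" using nb_le_nb_iff by simp
  with less_nb_Suc_block_index[of r] show "r < nb k" by simp
qed

lemma in_blk_iff: "r \<in> blk nb i \<longleftrightarrow> bi r = i"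
  unfolding blk_def using less_nb_iff[of r i] less_nb_iff[of r "Suc i"] by auto

lemma finite_blk: "finite (blk nb i)" unfolding blk_def by simp

lemma blk_subset_lessThan: "blk nb k \<subseteq> {..<nb (Suc k)}" unfolding blk_def by auto

lemma block_zero_iff: "block_zero nb A i j \<longleftrightarrow> (\<forall>r c. bi r = i \<longrightarrow> bi c = j \<longrightarrow> A r c = 0)"
  unfolding block_zero_def using in_blk_iff by blast

lemma finite_subset_lessThan_nb: "finite T \<Longrightarrow> \<exists>q. T \<subseteq> {..<nb q}"
proof -
  assume "finite T"
  then obtain k where "T \<subseteq> {..<k}" using finite_nat_bounded by blast
  moreover have "k \<le> nb k" by (rule strict_mono_imp_increasing[OF strict_mono_nb])
  ultimately show ?thesis by (intro exI[of _ k]) auto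
qed

lemma sum_lessThan_nb_eq_sum_blocks: "(\<Sum>i<nb p. f i) = (\<Sum>k<p. \<Sum>i\<in>blk nb k. f i)"
proof (induction p)
  case 0 thus ?case using nb_0 by simp
next
  case (Suc p)
  have "nb p \<le> nb (Suc p)" using nb_le_nb_iff by simp
  hence "(\<Sum>i\<in>{0..<nb (Suc p)}. f i) = (\<Sum>i\<in>{0..<nb p}. f i) + (\<Sum>i\<in>{nb p..<nb (Suc p)}. f i)"
    by (intro sum.atLeastLessThan_concat[symmetric]) auto
  thus ?case using Suc by (simp add: atLeast0LessThan blk_def)
qed

lemma sum_eq_sum_blocks:
  assumes "finite T" "T \<subseteq> {..<nb q}"
  shows "(\<Sum>j\<in>T. f j) = (\<Sum>l<q. \<Sum>t\<in>blk nb l. if t \<in> T then f t else 0)"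
proof -
  have "(\<Sum>j\<in>T. f j) = (\<Sum>j\<in>{..<nb q} \<inter> T. f j)" using assms by (simp add: Int_absorb1)
  also have "\<dots> = (\<Sum>j<nb q. if j \<in> T then f j else 0)" by (rule sum.inter_restrict) simp
  also have "\<dots> = (\<Sum>l<q. \<Sum>t\<in>blk nb l. if t \<in> T then f t else 0)"
    by (rule sum_lessThan_nb_eq_sum_blocks)
  finally show ?thesis .
qed

lemma sum_lessThan_nb_Suc_eq_sum_blk:
  assumes "\<And>t. bi t < k \<Longrightarrow> f t = 0"
  shows "(\<Sum>t<nb (Suc k). f t) = (\<Sum>t\<in>blk nb k. f t)"
proof (rule sum.mono_neutral_right)
  show "\<forall>t\<in>{..<nb (Suc k)} - blk nb k. f t = 0"
  proof
    fix t assume "t \<in> {..<nb (Suc k)} - blk nb k"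
    hence "bi t < Suc k" "bi t \<noteq> k" using less_nb_iff in_blk_iff by auto
    thus "f t = 0" using assms by simp
  qed
qed (simp_all add: blk_subset_lessThan)

text \<open>A matrix vanishing outside a block band of width \<open>b\<close>, whose blocks all have norm at
  most \<open>K\<close>, has norm at most \<open>(2b+1)K\<close>: each row of blocks and each column of blocks
  contains at most \<open>2b+1\<close> nonzero blocks (Schur test on the block level).\<close>

lemma banded_finite_sections_bounded:
  assumes band: "\<And>i j. A i j \<noteq> 0 \<Longrightarrow> bi j \<le> bi i + b \<and> bi i \<le> bi j + b"
  and block_bound: "\<And>k j u. (\<Sum>i\<in>blk nb k. (\<Sum>t\<in>blk nb j. A i t * u t)^2) \<le> K^2 * (\<Sum>t\<in>blk nb j. (u t)^2)"
  shows "finite_sections_bounded A ((2 * real b + 1) * K)"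
  unfolding finite_sections_bounded_def
proof (intro allI impI)
  fix R T :: "nat set" and x :: ivec
  assume R: "finite R" and T: "finite T"
  obtain q where Tq: "T \<subseteq> {..<nb q}" using finite_subset_lessThan_nb[OF T] by blast
  obtain p where Rp: "R \<subseteq> {..<nb p}" using finite_subset_lessThan_nb[OF R] by blast
  define x' where "x' t = (if t \<in> T then x t else 0)" for t
  define a where "a i l = (\<Sum>t\<in>blk nb l. A i t * x' t)" for i l
  define X where "X l = (\<Sum>t\<in>blk nb l. (x' t)^2)" for l
  define B where "B = 2 * real b + 1"
  have B0: "0 \<le> B" unfolding B_def by simp
  have row_eq: "(\<Sum>j\<in>T. A i j * x j) = (\<Sum>l<q. a i l)" for i
    unfolding sum_eq_sum_blocks[OF T Tq] a_def x'_def by (intro sum.cong) auto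
  have a_zero: "a i l = 0" if "\<not> (l \<le> bi i + b \<and> bi i \<le> l + b)" for i l
    unfolding a_def
  proof (intro sum.neutral ballI)
    fix t assume "t \<in> blk nb l"
    hence "A i t = 0" using band[of i t] that in_blk_iff by auto
    thus "A i t * x' t = 0" by simp
  qed
  have row: "(\<Sum>l<q. a i l)^2 \<le> B * (\<Sum>l<q. (a i l)^2)" for i
    unfolding B_def by (rule square_sum_le_band) (rule a_zero)
  have column: "(\<Sum>k<p. \<Sum>i\<in>blk nb k. (a i l)^2) \<le> B * (K^2 * X l)" for l
    unfolding B_def
  proof (rule sum_le_band)
    show "(\<Sum>i\<in>blk nb k. (a i l)^2) = 0" if "\<not> (k \<le> l + b \<and> l \<le> k + b)" for k
      using that by (intro sum.neutral ballI) (auto simp: a_zero in_blk_iff)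
    show "(\<Sum>i\<in>blk nb k. (a i l)^2) \<le> K^2 * X l" for k
      using block_bound[where k=k and j=l and u=x'] unfolding a_def X_def by simp
    show "0 \<le> K^2 * X l" unfolding X_def by (simp add: sum_nonneg)
  qed
  have "(\<Sum>i\<in>R. (\<Sum>j\<in>T. A i j * x j)^2) \<le> (\<Sum>i<nb p. (\<Sum>l<q. a i l)^2)"
    unfolding row_eq by (rule sum_mono2) (use Rp in auto)
  also have "\<dots> \<le> (\<Sum>i<nb p. B * (\<Sum>l<q. (a i l)^2))" by (rule sum_mono) (rule row)
  also have "\<dots> = B * (\<Sum>l<q. \<Sum>i<nb p. (a i l)^2)"
    by (simp add: sum_distrib_left sum.swap[of _ "{..<nb p}"])
  also have "\<dots> = B * (\<Sum>l<q. \<Sum>k<p. \<Sum>i\<in>blk nb k. (a i l)^2)"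
    by (simp add: sum_lessThan_nb_eq_sum_blocks)
  also have "\<dots> \<le> B * (\<Sum>l<q. B * (K^2 * X l))"
    by (intro mult_left_mono B0 sum_mono column)
  also have "\<dots> = (B * K)^2 * (\<Sum>l<q. X l)" by (simp add: sum_distrib_left power2_eq_square algebra_simps)
  also have "(\<Sum>l<q. X l) = (\<Sum>j\<in>T. (x j)^2)"
    unfolding sum_eq_sum_blocks[OF T Tq] X_def x'_def by (intro sum.cong) auto
  finally show "(\<Sum>i\<in>R. (\<Sum>j\<in>T. A i j * x j)^2) \<le> ((2 * real b + 1) * K)^2 * (\<Sum>j\<in>T. (x j)^2)"
    unfolding B_def .
qed

lemma mv_mv_eq_if_section_inverse:
  assumes "\<And>j. N \<le> j \<Longrightarrow> A i j = 0" "\<And>s j. s < N \<Longrightarrow> N \<le> j \<Longrightarrow> B s j = 0"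
    "section_inverse N A B" "i < N"
  shows "mv A (mv B x) i = x i"
proof -
  have "mv A (mv B x) i = (\<Sum>s<N. A i s * mv B x s)" by (rule mv_eq_sum_lessThan) (use assms(1) in auto)
  also have "\<dots> = (\<Sum>s<N. A i s * (\<Sum>j<N. B s j * x j))"
    by (intro sum.cong refl arg_cong[where f="\<lambda>t. A i _ * t"] mv_eq_sum_lessThan) (use assms(2) in auto)
  also have "\<dots> = (\<Sum>j<N. (\<Sum>s<N. A i s * B s j) * x j)"
    by (simp add: sum_mult_sum_swap sum_distrib_right mult.assoc)
  also have "\<dots> = (\<Sum>j<N. if j = i then x j else 0)"
    using assms(3,4) unfolding section_inverse_def by (intro sum.cong refl) auto
  also have "\<dots> = x i" using assms(4) by simp
  finally show ?thesis .
qed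

lemma mv_mv_eq_if_block_lower:
  assumes "\<And>i j. bi i < bi j \<Longrightarrow> A i j = 0" "\<And>i j. bi i < bi j \<Longrightarrow> B i j = 0"
    and "\<And>n. section_inverse (nb n) A B"
  shows "mv A (mv B x) = x"
proof
  fix i
  let ?N = "nb (Suc (bi i))"
  show "mv A (mv B x) i = x i"
  proof (rule mv_mv_eq_if_section_inverse[where N="?N"])
    show "A i j = 0" if "?N \<le> j" for j
      using that less_nb_iff[of j "Suc (bi i)"] by (intro assms(1)) simp
    show "B s j = 0" if "s < ?N" "?N \<le> j" for s j
      using that less_nb_iff[of s "Suc (bi i)"] less_nb_iff[of j "Suc (bi i)"] by (intro assms(2)) simp
  qed (fact assms(3), fact less_nb_Suc_block_index)
qed

lemma l2_inverse_if_block_lower: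
  assumes "\<And>i j. bi i < bi j \<Longrightarrow> A i j = 0" "\<And>i j. bi i < bi j \<Longrightarrow> B i j = 0"
    and "\<And>n. section_inverse (nb n) A B"
  shows "l2_inverse A B"
  unfolding l2_inverse_def
  using mv_mv_eq_if_block_lower[OF assms] mv_mv_eq_if_block_lower[OF assms(2,1) section_inverse_sym[OF assms(3)]]
  by blast

lemma block_diag_part_eq: "block_diag_part nb A r s = (if bi r = bi s then A r s else 0)"
  unfolding block_diag_part_def using in_blk_iff by auto

lemma finite_sections_bounded_block_diag_part:
  assumes "\<And>k u. (\<Sum>i\<in>blk nb k. (\<Sum>t\<in>blk nb k. A i t * u t)^2) \<le> K^2 * (\<Sum>t\<in>blk nb k. (u t)^2)"
  shows "finite_sections_bounded (block_diag_part nb A) K"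
proof -
  have "finite_sections_bounded (block_diag_part nb A) ((2 * real 0 + 1) * K)"
  proof (rule banded_finite_sections_bounded)
    fix i j assume "block_diag_part nb A i j \<noteq> 0"
    thus "bi j \<le> bi i + 0 \<and> bi i \<le> bi j + 0" by (auto simp: block_diag_part_eq split: if_splits)
  next
    fix k j and u :: ivec
    show "(\<Sum>i\<in>blk nb k. (\<Sum>t\<in>blk nb j. block_diag_part nb A i t * u t)^2) \<le> K^2 * (\<Sum>t\<in>blk nb j. (u t)^2)"
    proof (cases "k = j")
      case True
      have "(\<Sum>i\<in>blk nb k. (\<Sum>t\<in>blk nb j. block_diag_part nb A i t * u t)^2)
          = (\<Sum>i\<in>blk nb k. (\<Sum>t\<in>blk nb k. A i t * u t)^2)"
        using True by (intro sum.cong refl arg_cong[where f="\<lambda>x. x^2"]) (auto simp: block_diag_part_eq in_blk_iff)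
      thus ?thesis using assms True by simp
    next
      case False
      hence "(\<Sum>i\<in>blk nb k. (\<Sum>t\<in>blk nb j. block_diag_part nb A i t * u t)^2) = 0"
        by (intro sum.neutral ballI) (auto simp: block_diag_part_eq in_blk_iff)
      thus ?thesis by (simp add: sum_nonneg)
    qed
  qed
  thus ?thesis by simp
qed

lemma mv_block_diag_part: "mv (block_diag_part nb A) x i = (\<Sum>t\<in>blk nb (bi i). A i t * x t)"
proof -
  have "mv (block_diag_part nb A) x i = (\<Sum>t\<in>blk nb (bi i). block_diag_part nb A i t * x t)"
    unfolding mv_def by (rule suminf_finite) (auto simp: finite_blk block_diag_part_eq in_blk_iff)
  also have "\<dots> = (\<Sum>t\<in>blk nb (bi i). A i t * x t)"
    by (intro sum.cong refl) (simp add: block_diag_part_eq in_blk_iff)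
  finally show ?thesis .
qed

lemma elliptic_l2_block_diag_part:
  assumes bound: "\<And>k u. (\<Sum>i\<in>blk nb k. (\<Sum>t\<in>blk nb k. A i t * u t)^2) \<le> K^2 * (\<Sum>t\<in>blk nb k. (u t)^2)"
    and "e > 0"
    and block_elliptic: "\<And>k u. e * (\<Sum>i\<in>blk nb k. (u i)^2) \<le> (\<Sum>i\<in>blk nb k. u i * (\<Sum>t\<in>blk nb k. A i t * u t))"
  shows "elliptic_l2 (block_diag_part nb A)"
  unfolding elliptic_l2_def
proof (intro exI[of _ e] conjI allI impI \<open>e > 0\<close>)
  fix x assume xl: "in_l2 x"
  have "bounded_l2 (block_diag_part nb A)"
    by (rule bounded_l2_if_finite_sections_bounded[OF finite_sections_bounded_block_diag_part[OF bound]])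
  hence "in_l2 (mv (block_diag_part nb A) x)" using xl unfolding bounded_l2_def by blast
  define f where "f i = mv (block_diag_part nb A) x i * x i" for i
  have f_summable: "summable f" unfolding f_def
    using \<open>in_l2 (mv _ x)\<close> xl unfolding in_l2_def by (rule summable_mult_if_square_summable)
  have x_summable: "summable (\<lambda>i. (x i)^2)" using xl unfolding in_l2_def .
  have partial: "e * (\<Sum>i<nb n. (x i)^2) \<le> (\<Sum>i<nb n. f i)" for n
  proof -
    have "e * (\<Sum>i<nb n. (x i)^2) = (\<Sum>k<n. e * (\<Sum>i\<in>blk nb k. (x i)^2))"
      by (simp add: sum_lessThan_nb_eq_sum_blocks sum_distrib_left)
    also have "\<dots> \<le> (\<Sum>k<n. \<Sum>i\<in>blk nb k. x i * (\<Sum>t\<in>blk nb k. A i t * x t))"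
      by (intro sum_mono block_elliptic)
    also have "\<dots> = (\<Sum>i<nb n. f i)"
      unfolding f_def sum_lessThan_nb_eq_sum_blocks
      by (intro sum.cong refl) (auto simp: mv_block_diag_part in_blk_iff mult.commute)
    finally show ?thesis .
  qed
  have "(\<lambda>n. e * (\<Sum>i<nb n. (x i)^2)) \<longlonglongrightarrow> e * (\<Sum>i. (x i)^2)"
    using LIMSEQ_subseq_LIMSEQ[OF summable_LIMSEQ[OF x_summable] strict_mono_nb]
    by (intro tendsto_mult_left) (simp add: o_def)
  moreover have "(\<lambda>n. (\<Sum>i<nb n. f i)) \<longlonglongrightarrow> suminf f"
    using LIMSEQ_subseq_LIMSEQ[OF summable_LIMSEQ[OF f_summable] strict_mono_nb] by (simp add: o_def)
  ultimately have "e * (\<Sum>i. (x i)^2) \<le> suminf f"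
    by (rule LIMSEQ_le) (use partial in auto)
  thus "e * (l2norm x)^2 \<le> l2inner (mv (block_diag_part nb A) x) x"
    unfolding l2norm_sq[OF xl] l2inner_def f_def .
qed

lemma l2_inverse_block_diag_part:
  assumes "\<And>k s r. s \<in> blk nb k \<Longrightarrow> r \<in> blk nb k \<Longrightarrow>
      (\<Sum>t\<in>blk nb k. A s t * B t r) = (if s = r then 1 else 0)"
  shows "l2_inverse (block_diag_part nb A) (block_diag_part nb B)"
proof (rule l2_inverse_if_block_lower)
  show "block_diag_part nb A i j = 0" "block_diag_part nb B i j = 0" if "bi i < bi j" for i j
    using that by (simp_all add: block_diag_part_eq)
  show "section_inverse (nb n) (block_diag_part nb A) (block_diag_part nb B)" for n
    unfolding section_inverse_def
  proof (intro allI impI)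
    fix i j assume i: "i < nb n" and j: "j < nb n"
    show "(\<Sum>s<nb n. block_diag_part nb A i s * block_diag_part nb B s j) = (if i = j then 1 else 0)"
    proof (cases "bi i = bi j")
      case True
      have "nb (Suc (bi i)) \<le> nb n" using i less_nb_iff nb_le_nb_iff by (simp add: Suc_le_eq)
      hence "blk nb (bi i) \<subseteq> {..<nb n}" using blk_subset_lessThan[of "bi i"] by auto
      have "(\<Sum>s<nb n. block_diag_part nb A i s * block_diag_part nb B s j)
          = (\<Sum>s<nb n. if s \<in> blk nb (bi i) then A i s * B s j else 0)"
        using True by (intro sum.cong refl) (simp add: block_diag_part_eq in_blk_iff)
      also have "\<dots> = (\<Sum>s\<in>blk nb (bi i). A i s * B s j)"
        by (rule sum_lessThan_if_mem) fact
      also have "\<dots> = (if i = j then 1 else 0)"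
        using assms[of i "bi i" j] True by (simp add: in_blk_iff)
      finally show ?thesis .
    next
      case False
      hence "(\<Sum>s<nb n. block_diag_part nb A i s * block_diag_part nb B s j) = 0"
        by (intro sum.neutral ballI) (simp add: block_diag_part_eq)
      thus ?thesis using False by auto
    qed
  qed
qed

end

section \<open>The block LU factorization\<close>

locale banded_elliptic = block_partition nb for nb +
  fixes M :: imat and b0 :: nat and c Cm :: real
  assumes banded: "block_banded nb b0 M"
    and elliptic: "elliptic_l2 M"
    and c_pos: "c > 0"
    and elliptic_sections: "\<And>N x. c * (\<Sum>j<N. (x j)^2) \<le> (\<Sum>i<N. x i * (\<Sum>j<N. M i j * x j))"
    and sections_bounded: "finite_sections_bounded M Cm"
    and Cm_pos: "Cm > 0"
begin

lemma band:
  assumes "M i j \<noteq> 0"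
  shows "bi j \<le> bi i + b0 \<and> bi i \<le> bi j + b0"
proof (rule ccontr)
  assume "\<not> (bi j \<le> bi i + b0 \<and> bi i \<le> bi j + b0)"
  hence "block_zero nb M (bi i) (bi j)" using banded unfolding block_banded_def by auto
  with assms show False unfolding block_zero_iff by blast
qed

lemma M_sections_bound:
  "finite R \<Longrightarrow> finite T \<Longrightarrow> (\<Sum>i\<in>R. (\<Sum>j\<in>T. M i j * x j)^2) \<le> Cm^2 * (\<Sum>j\<in>T. (x j)^2)"
  by (rule finite_sections_boundedD[OF sections_bounded])

lemmas section_solution_bound = elliptic_section_solution_bound[OF c_pos elliptic_sections]

text \<open>\<open>section_inv k\<close> is the inverse of the section of \<open>M\<close> on the first \<open>k\<close> blocks; only its
  entries in \<open>{..<nb k}\<^sup>2\<close> matter.\<close>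

definition section_inv :: "nat \<Rightarrow> imat" where
  "section_inv k = (SOME B. section_inverse (nb k) M B \<and> section_inverse (nb k) B M)"

lemma section_inv: "section_inverse (nb k) M (section_inv k)" "section_inverse (nb k) (section_inv k) M"
proof -
  have "\<exists>B. section_inverse (nb k) M B \<and> section_inverse (nb k) B M"
    by (rule section_inverse_exists) (rule elliptic_section_injective[OF c_pos elliptic_sections])
  hence "section_inverse (nb k) M (section_inv k) \<and> section_inverse (nb k) (section_inv k) M"
    unfolding section_inv_def by (rule someI_ex)
  thus "section_inverse (nb k) M (section_inv k)" "section_inverse (nb k) (section_inv k) M" by auto
qed

lemmas M_section_inv = section_inverseD[OF section_inv(1)]
lemmas section_inv_M = section_inverseD[OF section_inv(2)]

definition lower_inv :: imat where
  "lower_inv i s = (if s = i then 1 else 0)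
     - (if s < nb (bi i) then (\<Sum>t<nb (bi i). M i t * section_inv (bi i) t s) else 0)"

definition upper :: imat where
  "upper i j = (\<Sum>s<nb (Suc (bi i)). lower_inv i s * M s j)"

definition upper_inv :: imat where
  "upper_inv s j = (if s < nb (Suc (bi j)) then section_inv (Suc (bi j)) s j else 0)"

definition lower :: imat where
  "lower i j = (\<Sum>s<nb (Suc (bi j)). M i s * section_inv (Suc (bi j)) s j)"

lemma lower_inv_eq_zero: "bi i < bi s \<Longrightarrow> lower_inv i s = 0"
proof -
  assume h: "bi i < bi s"
  hence "s \<noteq> i" by auto
  moreover have "\<not> s < nb (bi i)" using h less_nb_iff by simp
  ultimately show ?thesis unfolding lower_inv_def by simp
qed

lemma upper_inv_eq_zero: "bi j < bi s \<Longrightarrow> upper_inv s j = 0"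
  unfolding upper_inv_def using less_nb_iff by simp

lemma lower_eq_unit: "bi i \<le> bi j \<Longrightarrow> lower i j = (if i = j then 1 else 0)"
  unfolding lower_def by (rule M_section_inv) (simp_all add: less_nb_iff)

lemma lower_eq_zero_outside_band: "bi i > bi j + b0 \<Longrightarrow> lower i j = 0"
  unfolding lower_def
proof (intro sum.neutral ballI)
  fix s assume "bi i > bi j + b0" "s \<in> {..<nb (Suc (bi j))}"
  hence "M i s = 0" using band[of i s] less_nb_iff by fastforce
  thus "M i s * section_inv (Suc (bi j)) s j = 0" by simp
qed

lemma upper_eq_Schur_complement:
  "upper i j = M i j - (\<Sum>t<nb (bi i). M i t * (\<Sum>s<nb (bi i). section_inv (bi i) t s * M s j))"
proof -
  let ?k = "bi i"
  have le: "nb ?k \<le> nb (Suc ?k)" using nb_le_nb_iff by simp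
  have "upper i j = (\<Sum>s<nb (Suc ?k). (if s = i then M s j else 0)
      - (if s < nb ?k then (\<Sum>t<nb ?k. M i t * section_inv ?k t s) * M s j else 0))"
    unfolding upper_def lower_inv_def by (rule sum.cong) (auto simp: left_diff_distrib)
  also have "\<dots> = (\<Sum>s<nb (Suc ?k). (if s = i then M s j else 0))
      - (\<Sum>s<nb (Suc ?k). if s < nb ?k then (\<Sum>t<nb ?k. M i t * section_inv ?k t s) * M s j else 0)"
    by (rule sum_subtractf)
  also have "(\<Sum>s<nb (Suc ?k). (if s = i then M s j else 0)) = M i j"
    using less_nb_Suc_block_index[of i] by simp
  also have "(\<Sum>s<nb (Suc ?k). if s < nb ?k then (\<Sum>t<nb ?k. M i t * section_inv ?k t s) * M s j else 0)
     = (\<Sum>s<nb ?k. (\<Sum>t<nb ?k. M i t * section_inv ?k t s) * M s j)"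
    by (rule sum_lessThan_if_less[OF le])
  also have "\<dots> = (\<Sum>t<nb ?k. M i t * (\<Sum>s<nb ?k. section_inv ?k t s * M s j))"
    by (simp add: sum_mult_sum_swap(2) sum_distrib_left mult.assoc)
  finally show ?thesis .
qed

lemma upper_eq_zero_below_diag: "bi j < bi i \<Longrightarrow> upper i j = 0"
proof -
  assume h: "bi j < bi i"
  hence jl: "j < nb (bi i)" using less_nb_iff by simp
  have "(\<Sum>t<nb (bi i). M i t * (\<Sum>s<nb (bi i). section_inv (bi i) t s * M s j))
      = (\<Sum>t<nb (bi i). (if t = j then M i t else 0))"
    by (rule sum.cong) (use jl section_inv_M in auto)
  also have "\<dots> = M i j" using jl by simp
  finally show ?thesis unfolding upper_eq_Schur_complement by simp
qed

lemma upper_eq_zero_outside_band: "bi j > bi i + b0 \<Longrightarrow> upper i j = 0"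
  unfolding upper_def
proof (intro sum.neutral ballI)
  fix s assume h: "bi j > bi i + b0" "s \<in> {..<nb (Suc (bi i))}"
  hence "M s j = 0" using band[of s j] less_nb_iff by fastforce
  thus "lower_inv i s * M s j = 0" by simp
qed

lemma lower_inv_eq_zero_beyond: "nb (Suc (bi i)) \<le> s \<Longrightarrow> lower_inv i s = 0"
  using lower_inv_eq_zero less_nb_iff by (meson Suc_le_eq not_less)

lemma sum_M_upper_inv: "j < nb n \<Longrightarrow> (\<Sum>t<nb n. M i t * upper_inv t j) = lower i j"
proof -
  assume "j < nb n"
  hence le: "nb (Suc (bi j)) \<le> nb n" using less_nb_iff nb_le_nb_iff by simp
  have "(\<Sum>t<nb n. M i t * upper_inv t j) = (\<Sum>t<nb (Suc (bi j)). M i t * upper_inv t j)"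
    by (rule sum_lessThan_eq_if_vanishing[OF le]) (simp add: upper_inv_def)
  also have "\<dots> = lower i j" unfolding lower_def upper_inv_def by simp
  finally show ?thesis .
qed

lemma sum_lower_inv_M: "i < nb n \<Longrightarrow> (\<Sum>s<nb n. lower_inv i s * M s j) = upper i j"
proof -
  assume "i < nb n"
  hence le: "nb (Suc (bi i)) \<le> nb n" using less_nb_iff nb_le_nb_iff by simp
  show ?thesis unfolding upper_def by (rule sum_lessThan_eq_if_vanishing[OF le]) (simp add: lower_inv_eq_zero_beyond)
qed

lemma section_inverse_lower_inv_lower: "section_inverse (nb n) lower_inv lower"
  unfolding section_inverse_def
proof (intro allI impI)
  fix i j assume i: "i < nb n" and j: "j < nb n"
  show "(\<Sum>s<nb n. lower_inv i s * lower s j) = (if i = j then 1 else 0)"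
  proof (cases "bi i \<le> bi j")
    case True
    have "(\<Sum>s<nb n. lower_inv i s * lower s j) = (\<Sum>s<nb n. if s = j then lower_inv i s else 0)"
    proof (rule sum.cong)
      fix s assume "s \<in> {..<nb n}"
      show "lower_inv i s * lower s j = (if s = j then lower_inv i s else 0)"
      proof (cases "bi s \<le> bi j")
        case True thus ?thesis using lower_eq_unit by simp
      next
        case False
        hence "lower_inv i s = 0" using \<open>bi i \<le> bi j\<close> by (intro lower_inv_eq_zero) simp
        thus ?thesis by auto
      qed
    qed simp
    also have "\<dots> = lower_inv i j" using j by simp
    also have "\<dots> = (if i = j then 1 else 0)"
      unfolding lower_inv_def using True less_nb_iff by auto
    finally show ?thesis .
  next
    case False
    let ?k = "bi j"
    have "(\<Sum>s<nb n. lower_inv i s * lower s j)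
        = (\<Sum>t<nb (Suc ?k). (\<Sum>s<nb n. lower_inv i s * M s t) * section_inv (Suc ?k) t j)"
      unfolding lower_def by (simp add: sum_mult_sum_swap(1) sum_distrib_right mult.assoc)
    also have "\<dots> = (\<Sum>t<nb (Suc ?k). upper i t * section_inv (Suc ?k) t j)"
      using sum_lower_inv_M[OF i] by simp
    also have "\<dots> = 0"
    proof (intro sum.neutral ballI)
      fix t assume "t \<in> {..<nb (Suc ?k)}"
      hence "bi t < bi i" using False less_nb_iff by auto
      thus "upper i t * section_inv (Suc ?k) t j = 0" using upper_eq_zero_below_diag by simp
    qed
    finally show ?thesis using False by auto
  qed
qed

lemma section_inverse_lower_lower_inv: "section_inverse (nb n) lower lower_inv"
  by (rule section_inverse_sym[OF section_inverse_lower_inv_lower])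

lemma section_inverse_upper_upper_inv: "section_inverse (nb n) upper upper_inv"
  unfolding section_inverse_def
proof (intro allI impI)
  fix i j assume i: "i < nb n" and j: "j < nb n"
  have "(\<Sum>s<nb n. upper i s * upper_inv s j) = (\<Sum>s<nb n. (\<Sum>t<nb n. lower_inv i t * M t s) * upper_inv s j)"
    using sum_lower_inv_M[OF i] by simp
  also have "\<dots> = (\<Sum>t<nb n. lower_inv i t * (\<Sum>s<nb n. M t s * upper_inv s j))"
    by (simp add: sum_mult_sum_swap(2) sum_distrib_left mult.assoc)
  also have "\<dots> = (\<Sum>t<nb n. lower_inv i t * lower t j)" using sum_M_upper_inv[OF j] by simp
  also have "\<dots> = (if i = j then 1 else 0)" using section_inverse_lower_inv_lower i j unfolding section_inverse_def by blast
  finally show "(\<Sum>s<nb n. upper i s * upper_inv s j) = (if i = j then 1 else 0)" .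
qed

lemma section_inverse_upper_inv_upper: "section_inverse (nb n) upper_inv upper"
  by (rule section_inverse_sym[OF section_inverse_upper_upper_inv])

lemma sum_lower_upper: "i < nb n \<Longrightarrow> (\<Sum>s<nb n. lower i s * upper s j) = M i j"
proof -
  assume i: "i < nb n"
  have "(\<Sum>s<nb n. lower i s * upper s j) = (\<Sum>s<nb n. lower i s * (\<Sum>t<nb n. lower_inv s t * M t j))"
    using sum_lower_inv_M by simp
  also have "\<dots> = (\<Sum>t<nb n. (\<Sum>s<nb n. lower i s * lower_inv s t) * M t j)"
    by (simp add: sum_mult_sum_swap(1) sum_distrib_right mult.assoc)
  also have "\<dots> = (\<Sum>t<nb n. if t = i then M t j else 0)"
    by (rule sum.cong) (use section_inverse_lower_lower_inv i in \<open>auto simp: section_inverse_def\<close>)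
  also have "\<dots> = M i j" using i by simp
  finally show ?thesis .
qed

lemmas section_inv_bound = elliptic_section_inverse_bound[OF c_pos elliptic_sections section_inv(1)]

lemma lower_block_bound:
  "(\<Sum>i\<in>blk nb k. (\<Sum>t\<in>blk nb j. lower i t * u t)^2) \<le> (Cm / c)^2 * (\<Sum>t\<in>blk nb j. (u t)^2)"
proof -
  define z where "z = (\<lambda>s. \<Sum>t\<in>blk nb j. section_inv (Suc j) s t * u t)"
  have "(\<Sum>t\<in>blk nb j. lower i t * u t) = (\<Sum>s<nb (Suc j). M i s * z s)" for i
  proof -
    have "(\<Sum>t\<in>blk nb j. lower i t * u t)
        = (\<Sum>t\<in>blk nb j. (\<Sum>s<nb (Suc j). M i s * section_inv (Suc j) s t) * u t)"
      by (rule sum.cong) (auto simp: lower_def in_blk_iff)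
    thus ?thesis unfolding z_def by (simp add: sum_mult_sum_swap(1) sum_distrib_right mult.assoc)
  qed
  hence "(\<Sum>i\<in>blk nb k. (\<Sum>t\<in>blk nb j. lower i t * u t)^2) \<le> Cm^2 * (\<Sum>s<nb (Suc j). (z s)^2)"
    by (simp add: M_sections_bound finite_blk)
  also have "\<dots> \<le> Cm^2 * ((\<Sum>t\<in>blk nb j. (u t)^2) / c^2)"
    using section_inv_bound[OF blk_subset_lessThan, of j u] c_pos
    by (intro mult_left_mono) (simp_all add: z_def field_simps)
  also have "\<dots> = (Cm / c)^2 * (\<Sum>t\<in>blk nb j. (u t)^2)" by (simp add: power_divide)
  finally show ?thesis .
qed

lemma sum_upper_mult_eq:
  assumes "i \<in> blk nb k"
  shows "(\<Sum>t\<in>T. upper i t * u t) = (\<Sum>t\<in>T. M i t * u t)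
    - (\<Sum>r<nb k. M i r * (\<Sum>s<nb k. section_inv k r s * (\<Sum>t\<in>T. M s t * u t)))"
proof -
  have "(\<Sum>t\<in>T. upper i t * u t)
      = (\<Sum>t\<in>T. M i t * u t - (\<Sum>r<nb k. M i r * (\<Sum>s<nb k. section_inv k r s * M s t)) * u t)"
    using assms by (intro sum.cong refl) (simp add: upper_eq_Schur_complement in_blk_iff left_diff_distrib)
  thus ?thesis by (simp add: sum_subtractf sum_triple_product_swap)
qed

definition K_U :: real where "K_U = sqrt (2 * Cm^2 + 2 * (Cm^2 / c)^2)"

lemma K_U_sq: "K_U^2 = 2 * Cm^2 + 2 * (Cm^2 / c)^2"
  unfolding K_U_def by simp

lemma K_U_pos: "K_U > 0"
  unfolding K_U_def using Cm_pos by (simp add: add_pos_nonneg)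

lemma upper_block_bound:
  "(\<Sum>i\<in>blk nb k. (\<Sum>t\<in>blk nb j. upper i t * u t)^2) \<le> K_U^2 * (\<Sum>t\<in>blk nb j. (u t)^2)"
proof -
  define U2 where "U2 = (\<Sum>t\<in>blk nb j. (u t)^2)"
  define v where "v = (\<lambda>s. \<Sum>t\<in>blk nb j. M s t * u t)"
  define w where "w = (\<lambda>r. \<Sum>s<nb k. section_inv k r s * v s)"
  have v_bound: "(\<Sum>s\<in>R. (v s)^2) \<le> Cm^2 * U2" if "finite R" for R
    unfolding v_def U2_def using that by (rule M_sections_bound) (simp add: finite_blk)
  have "c^2 * (\<Sum>r<nb k. (w r)^2) \<le> (\<Sum>s<nb k. (v s)^2)"
    unfolding w_def by (rule section_inv_bound) simp
  hence w_bound: "(\<Sum>r<nb k. (w r)^2) \<le> Cm^2 * U2 / c^2"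
    using v_bound[of "{..<nb k}"] c_pos by (simp add: field_simps)
  have "(\<Sum>i\<in>blk nb k. (\<Sum>t\<in>blk nb j. upper i t * u t)^2)
      = (\<Sum>i\<in>blk nb k. (v i - (\<Sum>r<nb k. M i r * w r))^2)"
    by (intro sum.cong refl) (simp add: sum_upper_mult_eq v_def w_def)
  also have "\<dots> \<le> (\<Sum>i\<in>blk nb k. 2 * (v i)^2 + 2 * (\<Sum>r<nb k. M i r * w r)^2)"
    by (intro sum_mono power2_diff_le)
  also have "\<dots> = 2 * (\<Sum>i\<in>blk nb k. (v i)^2) + 2 * (\<Sum>i\<in>blk nb k. (\<Sum>r<nb k. M i r * w r)^2)"
    by (simp add: sum.distrib sum_distrib_left)
  also have "\<dots> \<le> 2 * (Cm^2 * U2) + 2 * (Cm^2 * (Cm^2 * U2 / c^2))"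
  proof -
    have "(\<Sum>i\<in>blk nb k. (\<Sum>r<nb k. M i r * w r)^2) \<le> Cm^2 * (\<Sum>r<nb k. (w r)^2)"
      by (rule M_sections_bound) (simp_all add: finite_blk)
    also have "\<dots> \<le> Cm^2 * (Cm^2 * U2 / c^2)" by (rule mult_left_mono[OF w_bound]) simp
    finally have "(\<Sum>i\<in>blk nb k. (\<Sum>r<nb k. M i r * w r)^2) \<le> Cm^2 * (Cm^2 * U2 / c^2)" .
    moreover have "(\<Sum>i\<in>blk nb k. (v i)^2) \<le> Cm^2 * U2" by (rule v_bound[OF finite_blk])
    ultimately show ?thesis by linarith
  qed
  also have "\<dots> = K_U^2 * U2" unfolding K_U_sq by (simp add: field_simps power2_eq_square)
  finally show ?thesis unfolding U2_def .
qed

lemma finite_sections_bounded_lower: "finite_sections_bounded lower ((2 * real b0 + 1) * (Cm / c))"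
proof (rule banded_finite_sections_bounded)
  fix i j assume h: "lower i j \<noteq> 0"
  show "bi j \<le> bi i + b0 \<and> bi i \<le> bi j + b0"
  proof (cases "bi i \<le> bi j")
    case True
    hence "i = j" using h lower_eq_unit by (auto split: if_splits)
    thus ?thesis by simp
  next
    case False
    have "\<not> bi i > bi j + b0" using h lower_eq_zero_outside_band by auto
    thus ?thesis using False by auto
  qed
qed (rule lower_block_bound)

lemma finite_sections_bounded_upper: "finite_sections_bounded upper ((2 * real b0 + 1) * K_U)"
proof (rule banded_finite_sections_bounded)
  fix i j assume h: "upper i j \<noteq> 0"
  show "bi j \<le> bi i + b0 \<and> bi i \<le> bi j + b0"
  proof -
    have "\<not> bi j < bi i" using h upper_eq_zero_below_diag by auto
    moreover have "\<not> bi j > bi i + b0" using h upper_eq_zero_outside_band by auto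
    ultimately show ?thesis by auto
  qed
qed (rule upper_block_bound)

lemma upper_inv_diag_block_bound:
  "(\<Sum>i\<in>blk nb k. (\<Sum>t\<in>blk nb k. upper_inv i t * u t)^2) \<le> (1 / c)^2 * (\<Sum>t\<in>blk nb k. (u t)^2)"
proof -
  define z where "z = (\<lambda>s. \<Sum>t\<in>blk nb k. section_inv (Suc k) s t * u t)"
  have "(\<Sum>t\<in>blk nb k. upper_inv i t * u t) = z i" if "i \<in> blk nb k" for i
  proof -
    have "i < nb (Suc k)" using that blk_subset_lessThan by auto
    thus ?thesis unfolding z_def by (intro sum.cong refl) (auto simp: upper_inv_def in_blk_iff)
  qed
  hence "(\<Sum>i\<in>blk nb k. (\<Sum>t\<in>blk nb k. upper_inv i t * u t)^2) = (\<Sum>i\<in>blk nb k. (z i)^2)"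
    by simp
  also have "\<dots> \<le> (\<Sum>i<nb (Suc k). (z i)^2)"
    by (rule sum_mono2) (use blk_subset_lessThan in auto)
  also have "\<dots> \<le> (1 / c)^2 * (\<Sum>t\<in>blk nb k. (u t)^2)"
    using section_inv_bound[OF blk_subset_lessThan, of k u] c_pos
    by (simp add: z_def field_simps power_divide)
  finally show ?thesis .
qed

lemma finite_sections_bounded_upper_inv:
  assumes "finite_sections_bounded lower K"
  shows "finite_sections_bounded upper_inv (K / c)"
  unfolding finite_sections_bounded_def
proof (intro allI impI)
  fix R T :: "nat set" and x :: ivec
  assume R: "finite R" and T: "finite T"
  obtain n where Tn: "T \<subseteq> {..<nb n}" using finite_subset_lessThan_nb[OF T] by blast
  define w where "w i = (\<Sum>j\<in>T. upper_inv i j * x j)" for i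
  have w0: "w i = 0" if "\<not> i < nb n" for i
    unfolding w_def
  proof (intro sum.neutral ballI)
    fix j assume "j \<in> T"
    hence "bi j < n" using Tn less_nb_iff by auto
    moreover have "n \<le> bi i" using that less_nb_iff by simp
    ultimately show "upper_inv i j * x j = 0" using upper_inv_eq_zero by simp
  qed
  have msol: "(\<Sum>i<nb n. M s i * w i) = (\<Sum>j\<in>T. lower s j * x j)" if "s < nb n" for s
  proof -
    have "(\<Sum>i<nb n. M s i * w i) = (\<Sum>j\<in>T. (\<Sum>i<nb n. M s i * upper_inv i j) * x j)"
      unfolding w_def by (simp add: sum_mult_sum_swap(1) sum_distrib_right mult.assoc)
    also have "\<dots> = (\<Sum>j\<in>T. lower s j * x j)" using sum_M_upper_inv Tn by (intro sum.cong refl) auto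
    finally show ?thesis .
  qed
  have "(\<Sum>i\<in>R. (w i)^2) \<le> (\<Sum>i\<in>R \<union> {..<nb n}. (w i)^2)" by (rule sum_mono2) (use R in auto)
  also have "\<dots> = (\<Sum>i<nb n. (w i)^2)"
    by (rule sum.mono_neutral_right) (use R w0 in auto)
  also have "\<dots> \<le> (\<Sum>s<nb n. (\<Sum>j\<in>T. lower s j * x j)^2) / c^2"
  proof -
    have "c^2 * (\<Sum>i<nb n. (w i)^2) \<le> (\<Sum>s<nb n. (\<Sum>j\<in>T. lower s j * x j)^2)"
      by (rule section_solution_bound) (use msol in auto)
    thus ?thesis using c_pos by (simp add: field_simps)
  qed
  also have "\<dots> \<le> K^2 * (\<Sum>j\<in>T. (x j)^2) / c^2"
    by (intro divide_right_mono finite_sections_boundedD[OF assms] T) auto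
  also have "\<dots> = (K / c)^2 * (\<Sum>j\<in>T. (x j)^2)" by (simp add: power_divide)
  finally show "(\<Sum>i\<in>R. (\<Sum>j\<in>T. upper_inv i j * x j)^2) \<le> (K / c)^2 * (\<Sum>j\<in>T. (x j)^2)"
    unfolding w_def .
qed

lemma finite_sections_bounded_lower_inv:
  assumes "finite_sections_bounded upper K"
  shows "finite_sections_bounded lower_inv (K / c)"
  unfolding finite_sections_bounded_def
proof (intro allI impI)
  fix R T :: "nat set" and x :: ivec
  assume R: "finite R" and T: "finite T"
  obtain n where n: "R \<union> T \<subseteq> {..<nb n}" using finite_subset_lessThan_nb[of "R \<union> T"] R T by blast
  define N where "N = nb n"
  define y where "y s = (\<Sum>j\<in>T. lower_inv s j * x j)" for s
  define v where "v i = (\<Sum>s<N. upper_inv i s * y s)" for i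
  have "(\<Sum>i<N. M r i * v i) = (if r \<in> T then x r else 0)" if "r < N" for r
  proof -
    have "(\<Sum>i<N. M r i * v i) = (\<Sum>s<N. (\<Sum>i<N. M r i * upper_inv i s) * y s)"
      unfolding v_def by (simp add: sum_mult_sum_swap(1) sum_distrib_right mult.assoc)
    also have "\<dots> = (\<Sum>s<N. lower r s * y s)"
      unfolding N_def by (intro sum.cong refl) (simp add: sum_M_upper_inv)
    also have "\<dots> = (if r \<in> T then x r else 0)"
      unfolding y_def N_def using that n
      by (intro section_inverse_apply[OF section_inverse_lower_lower_inv]) (auto simp: N_def)
    finally show ?thesis .
  qed
  hence "c^2 * (\<Sum>i<N. (v i)^2) \<le> (\<Sum>r<N. (if r \<in> T then x r else 0)^2)"
    by (intro section_solution_bound)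
  also have "\<dots> = (\<Sum>j\<in>T. (x j)^2)"
    using n unfolding N_def by (subst sum_lessThan_if_mem[symmetric]) (auto intro: sum.cong)
  finally have v_bound: "c^2 * (\<Sum>i<N. (v i)^2) \<le> (\<Sum>j\<in>T. (x j)^2)" .
  have "(\<Sum>i\<in>R. (\<Sum>j\<in>T. lower_inv i j * x j)^2) \<le> (\<Sum>i<N. (y i)^2)"
    unfolding y_def by (rule sum_mono2) (use n in \<open>auto simp: N_def\<close>)
  also have "\<dots> = (\<Sum>i<N. (\<Sum>t<N. upper i t * v t)^2)"
    unfolding v_def N_def
    by (intro sum.cong refl) (simp add: section_inverse_apply[OF section_inverse_upper_upper_inv])
  also have "\<dots> \<le> K^2 * (\<Sum>t<N. (v t)^2)" by (rule finite_sections_boundedD[OF assms]) auto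
  also have "\<dots> \<le> K^2 * ((\<Sum>j\<in>T. (x j)^2) / c^2)"
    using v_bound c_pos by (intro mult_left_mono) (auto simp: field_simps)
  also have "\<dots> = (K / c)^2 * (\<Sum>j\<in>T. (x j)^2)" by (simp add: power_divide)
  finally show "(\<Sum>i\<in>R. (\<Sum>j\<in>T. lower_inv i j * x j)^2) \<le> (K / c)^2 * (\<Sum>j\<in>T. (x j)^2)" .
qed

lemma mv_lower_lower_inv: "mv lower (mv lower_inv x) = x"
  by (rule mv_mv_eq_if_block_lower) (auto simp: lower_eq_unit lower_inv_eq_zero section_inverse_lower_lower_inv)

lemma l2_inverse_lower: "l2_inverse lower lower_inv"
  by (rule l2_inverse_if_block_lower) (auto simp: lower_eq_unit lower_inv_eq_zero section_inverse_lower_lower_inv)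

lemma M_eq_mmul_lower_upper: "M = mmul lower upper"
proof (intro ext)
  fix i j
  have "mmul lower upper i j = (\<Sum>s<nb (Suc (bi i)). lower i s * upper s j)"
    unfolding mmul_def
  proof (rule suminf_finite)
    fix s assume "s \<notin> {..<nb (Suc (bi i))}"
    hence "bi i < bi s" using less_nb_iff by simp
    thus "lower i s * upper s j = 0" using lower_eq_unit[of i s] by auto
  qed simp
  also have "\<dots> = M i j" by (rule sum_lower_upper) (rule less_nb_Suc_block_index)
  finally show "M i j = mmul lower upper i j" by simp
qed

lemma sum_blk_upper_upper_inv:
  assumes "s \<in> blk nb k" "r \<in> blk nb k"
  shows "(\<Sum>t\<in>blk nb k. upper s t * upper_inv t r) = (if s = r then 1 else 0)"
proof -
  have "(\<Sum>t\<in>blk nb k. upper s t * upper_inv t r) = (\<Sum>t<nb (Suc k). upper s t * upper_inv t r)"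
    using assms by (intro sum_lessThan_nb_Suc_eq_sum_blk[symmetric]) (simp add: upper_eq_zero_below_diag in_blk_iff)
  also have "\<dots> = (if s = r then 1 else 0)"
    using assms blk_subset_lessThan by (intro section_inverseD[OF section_inverse_upper_upper_inv]) auto
  finally show ?thesis .
qed

lemma sum_blk_upper_inv_upper:
  assumes "s \<in> blk nb k" "r \<in> blk nb k"
  shows "(\<Sum>t\<in>blk nb k. upper_inv s t * upper t r) = (if s = r then 1 else 0)"
proof -
  have "(\<Sum>t\<in>blk nb k. upper_inv s t * upper t r) = (\<Sum>t<nb (Suc k). upper_inv s t * upper t r)"
    using assms by (intro sum_lessThan_nb_Suc_eq_sum_blk[symmetric]) (simp add: upper_inv_eq_zero in_blk_iff)
  also have "\<dots> = (if s = r then 1 else 0)"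
    using assms blk_subset_lessThan by (intro section_inverseD[OF section_inverse_upper_inv_upper]) auto
  finally show ?thesis .
qed

lemma bounded_l2_M: "bounded_l2 M"
  by (rule bounded_l2_if_finite_sections_bounded[OF sections_bounded])

lemma bounded_l2_upper: "bounded_l2 upper"
  by (rule bounded_l2_if_finite_sections_bounded[OF finite_sections_bounded_upper])

lemma bounded_l2_upper_inv: "bounded_l2 upper_inv"
  by (rule bounded_l2_if_finite_sections_bounded[OF finite_sections_bounded_upper_inv[OF finite_sections_bounded_lower]])

lemma upper_eq_zero_beyond: "nb (Suc (bi i + b0)) \<le> s \<Longrightarrow> upper i s = 0"
proof -
  assume "nb (Suc (bi i + b0)) \<le> s"
  hence "\<not> bi s < Suc (bi i + b0)" using less_nb_iff[of s "Suc (bi i + b0)"] by simp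
  hence "bi s > bi i + b0" by simp
  thus ?thesis by (rule upper_eq_zero_outside_band)
qed

lemma sum_upper_upper_inv:
  "(\<Sum>s<nb (Suc (bi i + b0)). upper i s * upper_inv s j) = (if i = j then 1 else 0)"
proof -
  define n where "n = Suc (bi i + b0 + bi j)"
  have le: "nb (Suc (bi i + b0)) \<le> nb n" unfolding n_def using nb_le_nb_iff by simp
  have "(\<Sum>s<nb n. upper i s * upper_inv s j) = (\<Sum>s<nb (Suc (bi i + b0)). upper i s * upper_inv s j)"
    by (rule sum_lessThan_eq_if_vanishing[OF le]) (simp add: upper_eq_zero_beyond)
  moreover have "i < nb n" "j < nb n" unfolding n_def less_nb_iff by simp_all
  ultimately show ?thesis using section_inverseD[OF section_inverse_upper_upper_inv] by simp
qed

lemma mv_upper_upper_inv: "in_l2 y \<Longrightarrow> mv upper (mv upper_inv y) = y"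
proof
  fix i assume yl: "in_l2 y"
  have sm: "summable (\<lambda>j. upper_inv s j * y j)" for s using bounded_l2_upper_inv yl unfolding bounded_l2_def by blast
  define N where "N = nb (Suc (bi i + b0))"
  have "mv upper (mv upper_inv y) i = (\<Sum>s<N. upper i s * mv upper_inv y s)"
    by (rule mv_eq_sum_lessThan) (simp add: upper_eq_zero_beyond N_def)
  also have "\<dots> = (\<Sum>s<N. (\<Sum>j. upper i s * (upper_inv s j * y j)))"
    unfolding mv_def by (intro sum.cong refl suminf_mult[symmetric] sm)
  also have "\<dots> = (\<Sum>j. \<Sum>s<N. upper i s * (upper_inv s j * y j))"
    by (rule suminf_sum[symmetric]) (intro summable_mult sm)
  also have "\<dots> = (\<Sum>j. if j = i then y j else 0)"
  proof (rule arg_cong[where f=suminf], rule ext)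
    fix j
    have "(\<Sum>s<N. upper i s * (upper_inv s j * y j)) = (\<Sum>s<N. upper i s * upper_inv s j) * y j"
      by (simp add: sum_distrib_right mult.assoc)
    also have "\<dots> = (if j = i then y j else 0)" unfolding N_def sum_upper_upper_inv by auto
    finally show "(\<Sum>s<N. upper i s * (upper_inv s j * y j)) = (if j = i then y j else 0)" .
  qed
  also have "\<dots> = y i" by (subst suminf_finite[of "{i}"]) auto
  finally show "mv upper (mv upper_inv y) i = y i" .
qed

lemma upper_injective:
  assumes dl: "in_l2 d" and z: "\<And>i. mv upper d i = 0"
  shows "d = (\<lambda>_. 0)"
proof -
  have smM: "summable (\<lambda>t. M s t * d t)" for s using bounded_l2_M dl unfolding bounded_l2_def by blast
  have eq: "mv upper d i = mv lower_inv (mv M d) i" for i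
  proof -
    define Ns where "Ns = nb (Suc (bi i))"
    have "mv upper d i = (\<Sum>t. \<Sum>s<Ns. lower_inv i s * (M s t * d t))"
      unfolding mv_def upper_def Ns_def by (simp add: sum_distrib_right mult.assoc)
    also have "\<dots> = (\<Sum>s<Ns. \<Sum>t. lower_inv i s * (M s t * d t))"
      by (rule suminf_sum) (intro summable_mult smM)
    also have "\<dots> = (\<Sum>s<Ns. lower_inv i s * mv M d s)"
      unfolding mv_def by (intro sum.cong refl suminf_mult smM)
    also have "\<dots> = mv lower_inv (mv M d) i"
      by (rule mv_eq_sum_lessThan[symmetric]) (simp add: lower_inv_eq_zero_beyond Ns_def)
    finally show ?thesis .
  qed
  have "mv M d = mv lower (mv lower_inv (mv M d))" by (rule mv_lower_lower_inv[symmetric])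
  also have "mv lower_inv (mv M d) = (\<lambda>_. 0)" using eq z by (intro ext) metis
  also have "mv lower (\<lambda>_. 0) = (\<lambda>_. 0)" unfolding mv_def by simp
  finally show ?thesis by (rule elliptic_l2_injective[OF elliptic dl])
qed

text \<open>Rows of \<open>upper_inv\<close> are not finitely supported, so the two series cannot simply be
  interchanged as for \<open>mv_upper_upper_inv\<close>; injectivity of \<open>upper\<close> is used instead.\<close>

lemma mv_upper_inv_upper: "in_l2 y \<Longrightarrow> mv upper_inv (mv upper y) = y"
proof -
  assume yl: "in_l2 y"
  define w where "w = mv upper y"
  have wl: "in_l2 w" using bounded_l2_upper yl unfolding bounded_l2_def w_def by blast
  define z where "z = mv upper_inv w"
  have zl: "in_l2 z" using bounded_l2_upper_inv wl unfolding bounded_l2_def z_def by blast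
  have Uz: "mv upper z = w" unfolding z_def by (rule mv_upper_upper_inv[OF wl])
  define d where "d i = z i - y i" for i
  have dl: "in_l2 d" unfolding d_def by (rule in_l2_diff[OF zl yl])
  have "mv upper d i = 0" for i
  proof -
    define N where "N = nb (Suc (bi i + b0))"
    have r: "mv upper v i = (\<Sum>s<N. upper i s * v s)" for v by (rule mv_eq_sum_lessThan) (simp add: upper_eq_zero_beyond N_def)
    have "mv upper d i = mv upper z i - mv upper y i"
      unfolding r d_def by (simp add: right_diff_distrib sum_subtractf)
    thus ?thesis using Uz unfolding w_def by simp
  qed
  hence "d = (\<lambda>_. 0)" by (rule upper_injective[OF dl])
  hence "z = y" by (simp add: d_def fun_eq_iff)
  thus ?thesis unfolding z_def w_def .
qed

lemma upper_diag_block_elliptic: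
  "c * (\<Sum>i\<in>blk nb k. (u i)^2) \<le> (\<Sum>i\<in>blk nb k. u i * (\<Sum>t\<in>blk nb k. upper i t * u t))"
proof -
  define y where "y r = (\<Sum>t\<in>blk nb k. upper r t * u t)" for r
  define z where "z s = (\<Sum>t\<in>blk nb k. upper_inv s t * y t)" for s
  define N where "N = nb (Suc k)"
  have zu: "z s = u s" if s: "s \<in> blk nb k" for s
  proof -
    have "z s = (\<Sum>r\<in>blk nb k. (\<Sum>t\<in>blk nb k. upper_inv s t * upper t r) * u r)"
      unfolding z_def y_def by (simp add: sum_mult_sum_swap(1) sum_distrib_right mult.assoc)
    also have "\<dots> = (\<Sum>r\<in>blk nb k. if r = s then u r else 0)"
      by (intro sum.cong refl) (use s sum_blk_upper_inv_upper in auto)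
    also have "\<dots> = u s" using s finite_blk by simp
    finally show ?thesis .
  qed
  have Mz: "(\<Sum>s<N. M r s * z s) = (if r \<in> blk nb k then y r else 0)" if r: "r < N" for r
  proof -
    have "(\<Sum>s<N. M r s * z s) = (\<Sum>t\<in>blk nb k. (\<Sum>s<N. M r s * upper_inv s t) * y t)"
      unfolding z_def by (simp add: sum_mult_sum_swap(1) sum_distrib_right mult.assoc)
    also have "\<dots> = (\<Sum>t\<in>blk nb k. if t = r then y t else 0)"
    proof (intro sum.cong refl)
      fix t assume t: "t \<in> blk nb k"
      hence tN: "t < nb (Suc k)" using blk_subset_lessThan by auto
      have "bi r \<le> bi t" using r t less_nb_iff[of r "Suc k"] in_blk_iff unfolding N_def by auto
      hence "lower r t = (if r = t then 1 else 0)" by (rule lower_eq_unit)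
      moreover have "(\<Sum>s<N. M r s * upper_inv s t) = lower r t" unfolding N_def by (rule sum_M_upper_inv[OF tN])
      ultimately show "(\<Sum>s<N. M r s * upper_inv s t) * y t = (if t = r then y t else 0)" by auto
    qed
    also have "\<dots> = (if r \<in> blk nb k then y r else 0)" using finite_blk by simp
    finally show ?thesis .
  qed
  have "c * (\<Sum>i\<in>blk nb k. (u i)^2) = c * (\<Sum>i\<in>blk nb k. (z i)^2)" by (simp add: zu)
  also have "\<dots> \<le> c * (\<Sum>i<N. (z i)^2)"
    using c_pos by (intro mult_left_mono sum_mono2) (auto simp: N_def dest: subsetD[OF blk_subset_lessThan])
  also have "\<dots> \<le> (\<Sum>i<N. z i * (\<Sum>j<N. M i j * z j))" by (rule elliptic_sections)
  also have "\<dots> = (\<Sum>i<N. if i \<in> blk nb k then z i * y i else 0)"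
    by (intro sum.cong refl) (simp add: Mz)
  also have "\<dots> = (\<Sum>i\<in>blk nb k. z i * y i)" unfolding N_def by (rule sum_lessThan_if_mem[OF blk_subset_lessThan])
  also have "\<dots> = (\<Sum>i\<in>blk nb k. u i * (\<Sum>t\<in>blk nb k. upper i t * u t))"
    by (intro sum.cong refl) (simp add: zu y_def)
  finally show ?thesis .
qed

lemma upper_inv_diag_block_elliptic:
  "(c / K_U^2) * (\<Sum>i\<in>blk nb k. (u i)^2) \<le> (\<Sum>i\<in>blk nb k. u i * (\<Sum>t\<in>blk nb k. upper_inv i t * u t))"
proof -
  define y where "y i = (\<Sum>t\<in>blk nb k. upper_inv i t * u t)" for i
  have Uy: "(\<Sum>i\<in>blk nb k. upper r i * y i) = u r" if r: "r \<in> blk nb k" for r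
  proof -
    have "(\<Sum>i\<in>blk nb k. upper r i * y i) = (\<Sum>t\<in>blk nb k. (\<Sum>i\<in>blk nb k. upper r i * upper_inv i t) * u t)"
      unfolding y_def by (simp add: sum_mult_sum_swap(1) sum_distrib_right mult.assoc)
    also have "\<dots> = (\<Sum>t\<in>blk nb k. if t = r then u t else 0)"
      by (intro sum.cong refl) (use r sum_blk_upper_upper_inv in auto)
    also have "\<dots> = u r" using r finite_blk by simp
    finally show ?thesis .
  qed
  have "(\<Sum>r\<in>blk nb k. (u r)^2) = (\<Sum>r\<in>blk nb k. (\<Sum>i\<in>blk nb k. upper r i * y i)^2)"
    by (intro sum.cong refl) (simp add: Uy)
  also have "\<dots> \<le> K_U^2 * (\<Sum>i\<in>blk nb k. (y i)^2)" by (rule upper_block_bound)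
  finally have u2: "(\<Sum>r\<in>blk nb k. (u r)^2) \<le> K_U^2 * (\<Sum>i\<in>blk nb k. (y i)^2)" .
  have "c * (\<Sum>i\<in>blk nb k. (y i)^2) \<le> (\<Sum>i\<in>blk nb k. y i * (\<Sum>t\<in>blk nb k. upper i t * y t))"
    by (rule upper_diag_block_elliptic)
  also have "\<dots> = (\<Sum>i\<in>blk nb k. u i * y i)" by (intro sum.cong refl) (simp add: Uy)
  finally have cy: "c * (\<Sum>i\<in>blk nb k. (y i)^2) \<le> (\<Sum>i\<in>blk nb k. u i * y i)" .
  have "(c / K_U^2) * (\<Sum>i\<in>blk nb k. (u i)^2) \<le> (c / K_U^2) * (K_U^2 * (\<Sum>i\<in>blk nb k. (y i)^2))"
    using c_pos K_U_pos by (intro mult_left_mono u2) auto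
  also have "\<dots> = c * (\<Sum>i\<in>blk nb k. (y i)^2)" using K_U_pos by simp
  also have "\<dots> \<le> (\<Sum>i\<in>blk nb k. u i * y i)" by (rule cy)
  finally show ?thesis unfolding y_def .
qed

lemma l2_inverse_upper: "l2_inverse upper upper_inv"
  unfolding l2_inverse_def using mv_upper_upper_inv mv_upper_inv_upper by blast

lemma bounded_l2_lower: "bounded_l2 lower"
  by (rule bounded_l2_if_finite_sections_bounded[OF finite_sections_bounded_lower])

lemma bounded_l2_lower_inv: "bounded_l2 lower_inv"
  by (rule bounded_l2_if_finite_sections_bounded[OF finite_sections_bounded_lower_inv[OF finite_sections_bounded_upper]])

lemma block_lower_lower: "block_lower nb lower"
  unfolding block_lower_def block_zero_iff by (auto simp: lower_eq_unit)

lemma unit_block_diag_lower: "unit_block_diag nb lower"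
  unfolding unit_block_diag_def by (simp add: lower_eq_unit in_blk_iff)

lemma block_banded_lower: "block_banded nb b0 lower"
  unfolding block_banded_def block_zero_iff by (auto simp: lower_eq_unit lower_eq_zero_outside_band)

lemma block_upper_upper: "block_upper nb upper"
  unfolding block_upper_def block_zero_iff by (auto simp: upper_eq_zero_below_diag)

lemma block_banded_upper: "block_banded nb b0 upper"
  unfolding block_banded_def block_zero_iff by (auto simp: upper_eq_zero_below_diag upper_eq_zero_outside_band)

lemma bounded_l2_upper_diag: "bounded_l2 (block_diag_part nb upper)"
  by (rule bounded_l2_if_finite_sections_bounded[OF finite_sections_bounded_block_diag_part[OF upper_block_bound]])

lemma elliptic_l2_upper_diag: "elliptic_l2 (block_diag_part nb upper)"
  by (rule elliptic_l2_block_diag_part[OF upper_block_bound c_pos upper_diag_block_elliptic])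

lemma l2_inverse_upper_diag: "l2_inverse (block_diag_part nb upper) (block_diag_part nb upper_inv)"
  by (rule l2_inverse_block_diag_part[OF sum_blk_upper_upper_inv])

lemma bounded_l2_upper_inv_diag: "bounded_l2 (block_diag_part nb upper_inv)"
  by (rule bounded_l2_if_finite_sections_bounded[OF finite_sections_bounded_block_diag_part[OF upper_inv_diag_block_bound]])

lemma elliptic_l2_upper_inv_diag: "elliptic_l2 (block_diag_part nb upper_inv)"
  using c_pos K_U_pos
  by (intro elliptic_l2_block_diag_part[OF upper_inv_diag_block_bound _ upper_inv_diag_block_elliptic]) simp

end

theorem lemma3p7:
  fixes M :: imat and nb :: "nat \<Rightarrow> nat" and b0 :: nat
  assumes "bounded_l2 M"
    and "elliptic_l2 M"
    and "block_structure nb"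
    and "block_banded nb b0 M"
  shows "\<exists>L U. M = mmul L U
     \<and> block_lower nb L \<and> block_upper nb U \<and> unit_block_diag nb L
     \<and> block_banded nb b0 L \<and> block_banded nb b0 U
     \<and> bounded_l2 L \<and> bounded_l2 U
     \<and> (\<exists>Linv. bounded_l2 Linv \<and> l2_inverse L Linv)
     \<and> (\<exists>Uinv. bounded_l2 Uinv \<and> l2_inverse U Uinv)
     \<and> bounded_l2 (block_diag_part nb U) \<and> elliptic_l2 (block_diag_part nb U)
     \<and> (\<exists>Dinv. l2_inverse (block_diag_part nb U) Dinv \<and> bounded_l2 Dinv \<and> elliptic_l2 Dinv)"
proof -
  obtain c where c: "c > 0" "\<And>N x. c * (\<Sum>j<N. (x j)^2) \<le> (\<Sum>i<N. x i * (\<Sum>j<N. M i j * x j))"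
    using elliptic_sections_if_elliptic_l2[OF assms(2)] by blast
  obtain K where "finite_sections_bounded M K"
    using finite_sections_bounded_if_bounded_l2[OF assms(1)] by blast
  moreover have "K^2 \<le> (\<bar>K\<bar> + 1)^2"
    using power_mono[of "\<bar>K\<bar>" "\<bar>K\<bar> + 1" 2] by simp
  ultimately have K: "finite_sections_bounded M (\<bar>K\<bar> + 1)"
    by (rule finite_sections_bounded_mono)
  interpret banded_elliptic nb M b0 c "\<bar>K\<bar> + 1"
    by unfold_locales (use assms c K in simp_all)
  show ?thesis
    by (intro exI conjI)
      (rule M_eq_mmul_lower_upper block_lower_lower block_upper_upper unit_block_diag_lower
        block_banded_lower block_banded_upper bounded_l2_lower bounded_l2_upper
        bounded_l2_lower_inv l2_inverse_lower bounded_l2_upper_inv l2_inverse_upper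
        bounded_l2_upper_diag elliptic_l2_upper_diag
        l2_inverse_upper_diag bounded_l2_upper_inv_diag elliptic_l2_upper_inv_diag)+
qed

end
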